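(* Suppose Assumptions (A1)–(A3) hold. Fix any constant $\kappa_2>1$ and set $\kappa_1=\frac{2+3L_f^2}{2\rho_2(L)}$, $\kappa_3=\frac14\big(1+(1+8\kappa_2+\frac{8}{\rho_2(L)})^{1/2}\big)$, $\kappa_4=(\kappa_2+\frac{1}{\rho_2(L)})L_f^2+\big((\kappa_2+\frac{1}{\rho_2(L)})^2L_f^2+2\big)^{1/2}L_f$. Let $\beta>\max\{\frac{\kappa_1}{\kappa_2-1},\kappa_3,\kappa_4\}$, $\alpha\in(\beta+\kappa_1,\kappa_2\beta]$, and define $\epsilon_1=(\alpha-\beta)\rho_2(L)-\frac12(2+3L_f^2)$, $\epsilon_2=\beta^2\rho(L)+(2\alpha^2+\beta^2)\rho^2(L)+\frac52L_f^2$, $\epsilon_3=\beta-\frac12-\frac{\alpha}{2\beta^2}-\frac{1}{2\beta\rho_2(L)}$, $\epsilon_4=2\beta^2+\frac12$, $\epsilon_5=\frac14-\frac{1}{2\beta}(\frac1\beta+\frac{1}{\rho_2(L)}+\frac\alpha\beta)L_f^2$, $\epsilon_6=\frac{1}{\beta^2}(1+\frac{1}{\rho_2(L)}+\frac\alpha\beta)L_f^2+\frac{L_f(1+L_f)}{2}$. Let $\eta\in(0,\min\{\epsilon_1/\epsilon_2,\epsilon_3/\epsilon_4,\epsilon_5/\epsilon_6\})$ and set $\epsilon_7=\eta\min\{\epsilon_1-\eta\epsilon_2,\ \epsilon_3-\eta\epsilon_4,\ \epsilon_5-\eta\epsilon_6,\ \frac14\}$, $\epsilon_8=\frac{\alpha+\beta}{2\beta}+\frac{1}{2\rho_2(L)}$.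 Let $\{\boldsymbol x_k\}$ be generated by Algorithm 1 with these $\alpha,\beta,\eta$. Then for all $T\in\mathbb N_0$, $$\frac{1}{T+1}\sum_{k=0}^T W_k\le \frac{\epsilon_8\hat V_0}{\epsilon_7(T+1)},\qquad f(\bar x_{T+1})-f^*\le \frac{\epsilon_8\hat V_0}{n}.$$
   Context: Network of $n$ agents communicating over a weighted undirected graph $\mathcal G$ with symmetric nonnegative adjacency matrix $A=(a_{ij})$, $a_{ii}=0$, Laplacian $L=(L_{ij})=\mathrm{diag}(A\mathbf 1_n)-A$. $\rho(L)$ is the largest eigenvalue of $L$ and $\rho_2(L)$ its smallest positive eigenvalue. Each agent $i$ has $f_i:\mathbb R^p\to\mathbb R$; $f(x)=\frac1n\sum_{i=1}^n f_i(x)$, $\mathbb X^*=\arg\min f$, $f^*=\min f$. Assumptions: (A1) $\mathcal G$ is connected; (A2) $\mathbb X^*\neq\emptyset$ and $f^*>-\infty$; (A3) each $f_i$ is differentiable with $\|\nabla f_i(x)-\nabla f_i(y)\|\le L_f\|x-y\|$ for all $x,y$, for some $L_f>0$. Algorithm 1 (parameters $\alpha,\beta,\eta>0$): arbitrary $x_{i,0}\in\mathbb R^p$, $v_{i,0}\in\mathbb R^p$ with $\sum_{j=1}^n v_{j,0}=\mathbf 0_p$ (e.g. $v_{i,0}=\mathbf 0_p$), and for $k\ge0$, $i\in[n]$: $x_{i,k+1}=x_{i,k}-\eta\big(\alpha\sum_{j=1}^n L_{ij}x_{j,k}+\beta v_{i,k}+\nabla f_i(x_{i,k})\big)$, $v_{i,k+1}=v_{i,k}+\eta\beta\sum_{j=1}^nL_{ij}x_{j,k}$.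 Notation: $\boldsymbol x_k=\mathrm{col}(x_{1,k},\dots,x_{n,k})$, $\boldsymbol v_k=\mathrm{col}(v_{1,k},\dots,v_{n,k})$, $\boldsymbol K=(I_n-\frac1n\mathbf 1_n\mathbf 1_n^\top)\otimes I_p$, $\boldsymbol H=\frac1n(\mathbf 1_n\mathbf 1_n^\top)\otimes I_p$, $\|z\|_M^2=z^\top Mz$. $\bar x_k=\frac1n\sum_i x_{i,k}$, $\bar{\boldsymbol x}_k=\mathbf 1_n\otimes \bar x_k$, $\boldsymbol g_k=\mathrm{col}(\nabla f_1(x_{1,k}),\dots,\nabla f_n(x_{n,k}))$, $\bar{\boldsymbol g}_k=\boldsymbol H\boldsymbol g_k$, $\boldsymbol g_k^0=\mathrm{col}(\nabla f_1(\bar x_k),\dots,\nabla f_n(\bar x_k))$, $\bar{\boldsymbol g}^0_k=\boldsymbol H\boldsymbol g^0_k=\mathbf 1_n\otimes\nabla f(\bar x_k)$. $\hat V_k=\|\boldsymbol x_k\|^2_{\boldsymbol K}+\|\boldsymbol v_k+\frac1\beta\boldsymbol g_k^0\|^2_{\boldsymbol K}+n(f(\bar x_k)-f^* )$, $W_k=\|\boldsymbol x_k-\bar{\boldsymbol x}_k\|^2+\|\boldsymbol v_k+\frac1\beta\boldsymbol g^0_k\|^2_{\boldsymbol K}+\|\bar{\boldsymbol g}_k\|^2+\|\bar{\boldsymbol g}_k^0\|^2$. *)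

theory Defs
  imports "HOL-Analysis.Analysis"
begin

definition sym_nonneg_adj :: "real^'n^'n \<Rightarrow> bool" where
  "sym_nonneg_adj A \<longleftrightarrow> (\<forall>i j. A$i$j = A$j$i) \<and> (\<forall>i j. 0 \<le> A$i$j) \<and> (\<forall>i. A$i$i = 0)"

definition graph_connected :: "real^'n^'n \<Rightarrow> bool" where
  "graph_connected A \<longleftrightarrow> (\<forall>i j. (i, j) \<in> {(k, l). 0 < A$k$l}\<^sup>*)"

definition laplacian :: "real^'n^'n \<Rightarrow> real^'n^'n" where
  "laplacian A = (\<chi> i j. (if i = j then (\<Sum>k\<in>UNIV. A$i$k) else 0) - A$i$j)"

definition is_eigenvalue :: "real^'n^'n \<Rightarrow> real \<Rightarrow> bool" where
  "is_eigenvalue M lam \<longleftrightarrow> (\<exists>v. v \<noteq> 0 \<and> M *v v = lam *\<^sub>R v)"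

definition rho :: "real^'n^'n \<Rightarrow> real" where
  "rho M = Max {lam. is_eigenvalue M lam}"

definition rho2 :: "real^'n^'n \<Rightarrow> real" where
  "rho2 M = Min {lam. is_eigenvalue M lam \<and> 0 < lam}"

definition avg :: "('n::finite \<Rightarrow> 'a::real_vector) \<Rightarrow> 'a" where
  "avg z = (1 / real CARD('n)) *\<^sub>R (\<Sum>i\<in>UNIV. z i)"

definition Knorm2 :: "('n::finite \<Rightarrow> 'a::real_normed_vector) \<Rightarrow> real" where
  "Knorm2 z = (\<Sum>i\<in>UNIV. (norm (z i - avg z))\<^sup>2)"

end

theory Submission
  imports Defs
begin

text \<open>Stack the agents' states and split them into their mean and their disagreement
  \<open>a\<^sub>k = K x\<^sub>k\<close>. The dual variables keep zero mean, so with \<open>b\<^sub>k = K(v\<^sub>k + g\<^sup>0\<^sub>k / \<beta>)\<close> the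
  pair \<open>(a\<^sub>k, b\<^sub>k)\<close> follows a linear recursion driven by the Laplacian, perturbed by gradient
  differences, while the network average of the states takes an inexact gradient step on \<open>f\<close>.
  On the disagreement subspace the Laplacian lies between \<open>\<rho>\<^sub>2(L)\<close> and \<open>\<rho>(L)\<close> and has a
  positive semidefinite pseudo-inverse \<open>Q\<close>. The Lyapunov function
  \<open>V\<^sub>k = \<parallel>a\<^sub>k\<parallel>\<^sup>2/2 + \<langle>b\<^sub>k, Q b\<^sub>k\<rangle>/2 + \<alpha>/(2\<beta>) \<parallel>b\<^sub>k\<parallel>\<^sup>2 + \<langle>a\<^sub>k, b\<^sub>k\<rangle> + F\<^sub>k\<close>, where \<open>F\<^sub>k\<close> is \<open>n\<close> times
  the optimality gap of the average, decreases by at least \<open>\<epsilon>\<^sub>7 W\<^sub>k\<close> per step (Young's inequality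
  on every cross term and the descent lemma for \<open>f\<close>), and \<open>F\<^sub>k \<le> V\<^sub>k \<le> \<epsilon>\<^sub>8 Vhat\<^sub>k\<close>; telescoping
  gives both bounds.\<close>

section \<open>Mean and disagreement parts of stacked vectors\<close>

text \<open>For a stacked vector \<open>z = col(z\<^sub>1, \<dots>, z\<^sub>n)\<close>, \<open>Hproj z\<close> and \<open>Kproj z\<close> are the
  vectors \<open>H z\<close> and \<open>K z\<close> of the paper, and \<open>kron_mult M z\<close> is \<open>(M \<otimes> I\<^sub>p) z\<close>.\<close>

definition Hproj :: "('a::real_vector)^'n \<Rightarrow> 'a^'n" where
  "Hproj z = (\<chi> i. avg (vec_nth z))"

definition Kproj :: "('a::real_vector)^'n \<Rightarrow> 'a^'n" where
  "Kproj z = z - Hproj z"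

definition kron_mult :: "real^'n^'n \<Rightarrow> ('a::real_vector)^'n \<Rightarrow> 'a^'n" where
  "kron_mult M z = (\<chi> i. \<Sum>j\<in>UNIV. M$i$j *\<^sub>R z$j)"

lemma vec_nth_Hproj [simp]: "vec_nth (Hproj z) = (\<lambda>i. avg (vec_nth z))"
  by (simp add: Hproj_def vec_lambda_inverse)

lemma Kproj_nth: "Kproj z $ i = z $ i - avg (vec_nth z)"
  by (simp add: Kproj_def)

lemma kron_mult_nth [simp]: "kron_mult M z $ i = (\<Sum>j\<in>UNIV. M$i$j *\<^sub>R z$j)"
  by (simp add: kron_mult_def)

lemma avg_const [simp]: "avg (\<lambda>i::'n::finite. c) = c"
  by (simp add: avg_def sum_constant_scaleR)

lemma linear_Hproj: "linear (Hproj :: ('a::real_vector)^'n \<Rightarrow> _)"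
  by (rule linearI) (auto simp: vec_eq_iff avg_def sum.distrib scaleR_sum_right algebra_simps)

lemma linear_Kproj: "linear (Kproj :: ('a::real_vector)^'n \<Rightarrow> _)"
  unfolding Kproj_def by (intro linear_compose_sub linear_ident linear_Hproj)

lemma linear_kron_mult: "linear (kron_mult M :: ('a::real_vector)^'n \<Rightarrow> _)"
  by (rule linearI) (auto simp: vec_eq_iff sum.distrib scaleR_sum_right algebra_simps)

lemma Hproj_idem [simp]: "Hproj (Hproj z) = Hproj z"
  by (simp add: vec_eq_iff)

lemma Hproj_Kproj [simp]: "Hproj (Kproj z) = 0"
  using linear_diff[OF linear_Hproj, of z "Hproj z"] by (simp add: Kproj_def)

lemma Kproj_idem [simp]: "Kproj (Kproj z) = Kproj z"
  by (simp add: Kproj_def[of "Kproj z"])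

lemma Kproj_eq_self: "Hproj z = 0 \<Longrightarrow> Kproj z = z"
  by (simp add: Kproj_def)

lemma inner_Hproj_commute: "inner (Hproj z) w = inner z (Hproj w)"
  for z :: "('a::real_inner)^'n"
  by (simp add: inner_vec_def avg_def inner_sum_left inner_sum_right sum_distrib_left)
    (subst sum.swap, simp)

lemma inner_Kproj_commute: "inner (Kproj z) w = inner z (Kproj w)"
  for z :: "('a::real_inner)^'n"
  by (simp add: Kproj_def inner_diff_left inner_diff_right inner_Hproj_commute)

lemma power2_norm_vec: "(norm z)\<^sup>2 = (\<Sum>i\<in>UNIV. (norm (z$i))\<^sup>2)"
  for z :: "('a::real_inner)^'n"
  by (simp add: power2_norm_eq_inner inner_vec_def)

lemma power2_norm_Hproj_Kproj: "(norm z)\<^sup>2 = (norm (Hproj z))\<^sup>2 + (norm (Kproj z))\<^sup>2"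
  for z :: "('a::real_inner)^'n"
proof -
  have "inner (Hproj z) (Kproj z) = 0"
    by (simp add: inner_Hproj_commute)
  moreover have "Hproj z + Kproj z = z"
    by (simp add: Kproj_def)
  ultimately show ?thesis
    by (metis norm_add_Pythagorean orthogonal_def)
qed

lemma norm_Kproj_le: "norm (Kproj z) \<le> norm z"
  for z :: "('a::real_inner)^'n"
  by (rule power2_le_imp_le) (use power2_norm_Hproj_Kproj[of z] in auto)

lemma norm_Hproj_le: "norm (Hproj z) \<le> norm z"
  for z :: "('a::real_inner)^'n"
  by (rule power2_le_imp_le) (use power2_norm_Hproj_Kproj[of z] in auto)

lemma Knorm2_eq_norm_Kproj: "Knorm2 z = (norm (Kproj (vec_lambda z)))\<^sup>2"
  for z :: "'n::finite \<Rightarrow> 'a::real_inner"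
  by (simp add: Knorm2_def power2_norm_vec Kproj_nth vec_lambda_inverse)

lemma power2_norm_Hproj: "(norm (Hproj z))\<^sup>2 = real CARD('n) * (norm (avg (vec_nth z)))\<^sup>2"
  for z :: "('a::real_inner)^'n"
  by (simp add: power2_norm_vec)

lemma norm_vec_le_componentwise:
  fixes p :: "('a::real_inner)^'n" and q :: "('b::real_inner)^'n"
  assumes "\<And>i. norm (p$i) \<le> c * norm (q$i)" and "0 \<le> c"
  shows "norm p \<le> c * norm q"
proof -
  have "(norm p)\<^sup>2 \<le> (\<Sum>i\<in>UNIV. (c * norm (q$i))\<^sup>2)"
    unfolding power2_norm_vec by (intro sum_mono power_mono assms) simp
  also have "\<dots> = (c * norm q)\<^sup>2"
    by (simp add: power_mult_distrib sum_distrib_left power2_norm_vec)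
  finally show ?thesis
    using assms(2) by (simp add: power2_le_iff_abs_le abs_le_iff)
qed

section \<open>The graph Laplacian\<close>

lemma laplacian_nth: "laplacian A $ i $ j = (if i = j then (\<Sum>k\<in>UNIV. A$i$k) else 0) - A$i$j"
  by (simp add: laplacian_def)

lemma laplacian_row_sum [simp]: "(\<Sum>j\<in>UNIV. laplacian A $ i $ j) = 0"
  by (simp add: laplacian_nth sum_subtractf)

lemma laplacian_symmetric: "sym_nonneg_adj A \<Longrightarrow> laplacian A $ i $ j = laplacian A $ j $ i"
  by (auto simp: laplacian_nth sym_nonneg_adj_def)

lemma Hproj_kron_laplacian:
  assumes "sym_nonneg_adj A"
  shows "Hproj (kron_mult (laplacian A) z) = 0"
proof -
  have "(\<Sum>i\<in>UNIV. kron_mult (laplacian A) z $ i) = (\<Sum>j\<in>UNIV. (\<Sum>i\<in>UNIV. laplacian A $ i $ j) *\<^sub>R z $ j)"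
    by (simp add: scaleR_sum_left) (rule sum.swap)
  also have "\<dots> = 0"
    by (simp add: laplacian_symmetric[OF assms, of _ j for j])
  finally show ?thesis
    by (simp add: vec_eq_iff avg_def)
qed

lemma kron_laplacian_Hproj: "kron_mult (laplacian A) (Hproj z) = 0"
  by (simp add: vec_eq_iff flip: scaleR_sum_left)

lemma kron_laplacian_Kproj: "kron_mult (laplacian A) (Kproj z) = kron_mult (laplacian A) z"
  using linear_diff[OF linear_kron_mult, of "laplacian A" z "Hproj z"]
  by (simp add: Kproj_def kron_laplacian_Hproj)

lemma Kproj_kron_laplacian:
  "sym_nonneg_adj A \<Longrightarrow> Kproj (kron_mult (laplacian A) z) = kron_mult (laplacian A) z"
  by (simp add: Kproj_def Hproj_kron_laplacian)

lemma inner_kron_symmetric_commute: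
  assumes "\<And>i j. M$i$j = M$j$i"
  shows "inner (kron_mult M z) w = inner z (kron_mult M w)"
proof -
  have "inner (kron_mult M z) w = (\<Sum>i\<in>UNIV. \<Sum>j\<in>UNIV. M$i$j * inner (z$j) (w$i))"
    by (simp add: inner_vec_def inner_sum_left)
  also have "\<dots> = (\<Sum>j\<in>UNIV. \<Sum>i\<in>UNIV. M$i$j * inner (z$j) (w$i))"
    by (rule sum.swap)
  also have "\<dots> = inner z (kron_mult M w)"
    by (simp add: inner_vec_def inner_sum_right assms mult.commute)
  finally show ?thesis .
qed

lemma laplacian_quadratic_form:
  fixes z :: "('a::real_inner)^'n"
  assumes "sym_nonneg_adj A"
  shows "inner z (kron_mult (laplacian A) z)
    = (1/2) * (\<Sum>i\<in>UNIV. \<Sum>j\<in>UNIV. A$i$j * (norm (z$i - z$j))\<^sup>2)"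
proof -
  have sym: "A$i$j = A$j$i" for i j
    using assms by (simp add: sym_nonneg_adj_def)
  define S where "S = (\<Sum>i\<in>UNIV. \<Sum>j\<in>UNIV. A$i$j * inner (z$i) (z$i))"
  define C where "C = (\<Sum>i\<in>UNIV. \<Sum>j\<in>UNIV. A$i$j * inner (z$i) (z$j))"
  have "inner z (kron_mult (laplacian A) z) = S - C"
    by (simp add: S_def C_def inner_vec_def inner_sum_right laplacian_nth left_diff_distrib
        sum_subtractf sum_distrib_right if_distrib[of "\<lambda>t. t * _"] cong: if_cong)
  moreover have "(\<Sum>i\<in>UNIV. \<Sum>j\<in>UNIV. A$i$j * inner (z$j) (z$j)) = S"
    by (subst sum.swap) (simp add: S_def sym)
  then have "(\<Sum>i\<in>UNIV. \<Sum>j\<in>UNIV. A$i$j * (norm (z$i - z$j))\<^sup>2) = 2 * S - 2 * C"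
    by (simp add: S_def C_def power2_norm_eq_inner inner_diff_left inner_diff_right
        inner_commute[of "z$j" "z$i" for i j] algebra_simps sum.distrib sum_subtractf sum_distrib_left)
  ultimately show ?thesis
    by simp
qed

lemma kron_laplacian_eq_0_imp_consensus:
  fixes z :: "('a::real_inner)^'n"
  assumes "sym_nonneg_adj A" "graph_connected A" "kron_mult (laplacian A) z = 0"
  shows "z$i = z$j"
proof -
  have nonneg: "0 \<le> A$k$l * (norm (z$k - z$l))\<^sup>2" for k l
    using assms(1) by (simp add: sym_nonneg_adj_def)
  have "(\<Sum>k\<in>UNIV. \<Sum>l\<in>UNIV. A$k$l * (norm (z$k - z$l))\<^sup>2) = 0"
    using laplacian_quadratic_form[OF assms(1), of z] assms(3) by simp
  then have "A$k$l * (norm (z$k - z$l))\<^sup>2 = 0" for k l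
    by (simp add: sum_nonneg_eq_0_iff sum_nonneg nonneg)
  then have edge: "0 < A$k$l \<Longrightarrow> z$k = z$l" for k l
    by (metis mult_eq_0_iff order_less_irrefl zero_eq_power2 right_minus_eq norm_eq_zero)
  have "(i, j) \<in> {(k, l). 0 < A$k$l}\<^sup>*"
    using assms(2) by (simp add: graph_connected_def)
  then show ?thesis
    by (induction rule: rtrancl_induct) (auto dest: edge)
qed

lemma kron_laplacian_eq_0_imp_Kproj:
  fixes z :: "('a::real_inner)^'n"
  assumes "sym_nonneg_adj A" "graph_connected A" "kron_mult (laplacian A) z = 0"
  shows "Kproj z = 0"
proof -
  have "vec_nth z = (\<lambda>_. z$i)" for i
    using kron_laplacian_eq_0_imp_consensus[OF assms] by blast
  then have "avg (vec_nth z) = z$i" for i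
    by (metis avg_const)
  then show ?thesis
    by (simp add: vec_eq_iff Kproj_nth)
qed

section \<open>Positive semidefinite operators\<close>

definition psd_operator :: "('a::real_inner \<Rightarrow> 'a) \<Rightarrow> bool" where
  "psd_operator N \<longleftrightarrow> linear N \<and> (\<forall>x y. inner (N x) y = inner x (N y)) \<and> (\<forall>x. 0 \<le> inner x (N x))"

lemma psd_operatorI:
  "linear N \<Longrightarrow> (\<And>x y. inner (N x) y = inner x (N y)) \<Longrightarrow> (\<And>x. 0 \<le> inner x (N x)) \<Longrightarrow> psd_operator N"
  by (simp add: psd_operator_def)

lemma psd_operator_diffI:
  assumes "linear P" "linear R"
    and "\<And>x y. inner (P x) y = inner x (P y)" "\<And>x y. inner (R x) y = inner x (R y)"
    and "\<And>x. inner x (R x) \<le> inner x (P x)"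
  shows "psd_operator (\<lambda>z. P z - R z)"
  using assms by (intro psd_operatorI linear_compose_sub) (auto simp: inner_diff_left inner_diff_right)

lemma
  assumes "psd_operator N"
  shows psd_operator_linear: "linear N"
    and psd_operator_commute: "inner (N x) y = inner x (N y)"
    and psd_operator_nonneg: "0 \<le> inner x (N x)"
  using assms by (auto simp: psd_operator_def)

lemma psd_operator_quadratic_add:
  assumes "psd_operator N"
  shows "inner (x + y) (N (x + y)) = inner x (N x) + 2 * inner (N x) y + inner y (N y)"
proof -
  have "inner x (N y) = inner (N x) y"
    by (simp add: psd_operator_commute[OF assms])
  then show ?thesis
    by (simp add: linear_add[OF psd_operator_linear[OF assms]] inner_add_left inner_add_right
        inner_commute[of y "N x"])
qed

lemma psd_operator_quadratic_scale:
  assumes "psd_operator N"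
  shows "inner (c *\<^sub>R x) (N (c *\<^sub>R x)) = c\<^sup>2 * inner x (N x)"
  by (simp add: linear_scale[OF psd_operator_linear[OF assms]] power2_eq_square)

lemma psd_operator_cross_le:
  assumes "psd_operator N"
  shows "2 * inner (N x) y \<le> inner x (N x) + inner y (N y)"
  using psd_operator_nonneg[OF assms, of "x + (-1) *\<^sub>R y"]
  unfolding psd_operator_quadratic_add[OF assms] psd_operator_quadratic_scale[OF assms]
  by simp

lemma psd_operator_add_le:
  assumes "psd_operator N"
  shows "inner (x + y) (N (x + y)) \<le> 2 * inner x (N x) + 2 * inner y (N y)"
  using psd_operator_cross_le[OF assms, of x y]
  unfolding psd_operator_quadratic_add[OF assms] by simp

text \<open>A vector of zero energy lies in the kernel: otherwise the energy would become negative
  along \<open>u + t N u\<close> for small \<open>t < 0\<close>.\<close>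

lemma psd_operator_kernel:
  assumes N: "psd_operator N" and u: "inner u (N u) = 0"
  shows "N u = 0"
proof (rule ccontr)
  assume "N u \<noteq> 0"
  define s where "s = inner (N u) (N u)"
  have s_pos: "0 < s"
    using \<open>N u \<noteq> 0\<close> by (simp add: s_def)
  define c where "c = inner (N u) (N (N u))"
  define t where "t = - s / (\<bar>c\<bar> + 1)"
  have "0 \<le> inner (u + t *\<^sub>R N u) (N (u + t *\<^sub>R N u))"
    by (rule psd_operator_nonneg[OF N])
  also have "\<dots> = t * (2 * s + t * c)"
    unfolding psd_operator_quadratic_add[OF N] psd_operator_quadratic_scale[OF N] u
    by (simp add: s_def c_def power2_eq_square algebra_simps)
  finally have nonneg: "0 \<le> t * (2 * s + t * c)" .
  have "\<bar>t * c\<bar> \<le> s"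
    using s_pos by (simp add: t_def abs_mult divide_le_eq)
  then have "0 < 2 * s + t * c"
    using s_pos by (simp add: abs_le_iff)
  moreover have "t < 0"
    using s_pos by (simp add: t_def)
  ultimately have "t * (2 * s + t * c) < 0"
    by (simp add: mult_neg_pos)
  with nonneg show False
    by linarith
qed

lemma psd_operator_cauchy_schwarz:
  assumes N: "psd_operator N"
  shows "(inner x (N y))\<^sup>2 \<le> inner x (N x) * inner y (N y)"
proof (cases "inner y (N y) = 0")
  case True
  then show ?thesis
    using psd_operator_kernel[OF N True] by simp
next
  case False
  define b where "b = inner y (N y)"
  define e where "e = inner x (N y)"
  have b_pos: "0 < b"
    using False psd_operator_nonneg[OF N, of y] by (simp add: b_def)
  have "0 \<le> inner (x + (- e / b) *\<^sub>R y) (N (x + (- e / b) *\<^sub>R y))"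
    by (rule psd_operator_nonneg[OF N])
  also have "\<dots> = inner x (N x) - e\<^sup>2 / b"
    unfolding psd_operator_quadratic_add[OF N] psd_operator_quadratic_scale[OF N]
    using b_pos psd_operator_commute[OF N, of x y]
    by (simp add: b_def e_def field_simps power2_eq_square)
  finally show ?thesis
    using b_pos by (simp add: e_def b_def field_simps)
qed

lemma psd_operator_kron_laplacian:
  "sym_nonneg_adj A \<Longrightarrow> psd_operator (kron_mult (laplacian A) :: ('a::real_inner)^'n \<Rightarrow> _)"
  by (intro psd_operatorI linear_kron_mult inner_kron_symmetric_commute laplacian_symmetric)
    (auto simp: laplacian_quadratic_form sym_nonneg_adj_def intro!: sum_nonneg)

section \<open>Spectral bounds for the Laplacian\<close>

lemma rayleigh_min_attained:
  fixes N :: "'a::euclidean_space \<Rightarrow> 'a" and P :: "'a \<Rightarrow> 'b::real_normed_vector"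
  assumes N: "linear N" and P: "linear P" and y0: "y0 \<noteq> 0" "P y0 = 0"
  obtains u where "norm u = 1" "P u = 0"
    "\<And>y. P y = 0 \<Longrightarrow> inner u (N u) * (norm y)\<^sup>2 \<le> inner y (N y)"
proof -
  let ?q = "\<lambda>z. inner z (N z)"
  define S where "S = sphere 0 1 \<inter> {z. P z = 0}"
  have unit_in_S: "(1 / norm y) *\<^sub>R y \<in> S" if "y \<noteq> 0" "P y = 0" for y
    using that by (simp add: S_def linear_scale[OF P])
  have "continuous_on UNIV P"
    by (rule linear_continuous_on[OF P[unfolded linear_conv_bounded_linear]])
  then have "compact S"
    unfolding S_def by (intro compact_Int_closed compact_sphere closed_Collect_eq continuous_on_const)
  moreover have "continuous_on S ?q"
    by (intro continuous_on_inner continuous_on_id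
        linear_continuous_on[OF N[unfolded linear_conv_bounded_linear]])
  ultimately obtain u where u: "u \<in> S" and umin: "\<And>z. z \<in> S \<Longrightarrow> ?q u \<le> ?q z"
    using continuous_attains_inf[of S ?q] unit_in_S[OF y0] by blast
  have "?q u * (norm y)\<^sup>2 \<le> ?q y" if "P y = 0" for y
  proof (cases "y = 0")
    case False
    have "?q u \<le> ?q ((1 / norm y) *\<^sub>R y)"
      by (rule umin[OF unit_in_S[OF False that]])
    also have "\<dots> = ?q y / (norm y)\<^sup>2"
      by (simp add: linear_scale[OF N] power2_eq_square)
    finally show ?thesis
      using False by (simp add: le_divide_eq)
  qed (simp add: linear_0[OF N])
  then show ?thesis
    using that u by (auto simp: S_def)
qed

lemma exists_nonzero_vec:
  "\<exists>y::('a::euclidean_space)^'n. y \<noteq> 0"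
proof -
  obtain e :: 'a where "e \<in> Basis"
    using nonempty_Basis by blast
  then have "axis undefined e \<noteq> (0::'a^'n)"
    by (simp add: axis_eq_0_iff nonzero_Basis)
  then show ?thesis
    by blast
qed

lemma exists_nonzero_Hproj_eq_0:
  assumes "2 \<le> CARD('n)"
  shows "\<exists>y::('a::euclidean_space)^'n. y \<noteq> 0 \<and> Hproj y = 0"
proof -
  have "\<not> CARD('n) \<le> Suc 0"
    using assms by simp
  then obtain i j :: 'n where "i \<noteq> j"
    using card_le_Suc0_iff_eq[of "UNIV :: 'n set"] by auto
  obtain e :: 'a where "e \<in> Basis"
    using nonempty_Basis by blast
  define y where "y = (axis i e - axis j e :: 'a^'n)"
  have "y $ i = e"
    using \<open>i \<noteq> j\<close> by (simp add: y_def axis_def)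
  moreover have "vec_nth y = (\<lambda>k. (if k = i then e else 0) - (if k = j then e else 0))"
    by (simp add: y_def axis_def fun_eq_iff)
  then have "Hproj y = 0"
    by (simp add: vec_eq_iff avg_def sum_subtractf)
  ultimately show ?thesis
    using \<open>e \<in> Basis\<close> nonzero_Basis by (metis zero_index)
qed

lemma is_eigenvalue_kron_mult:
  fixes u :: "('a::euclidean_space)^'n"
  assumes eig: "kron_mult M u = c *\<^sub>R u" and "u \<noteq> 0"
  shows "is_eigenvalue M c"
proof -
  obtain i where "u$i \<noteq> 0"
    using \<open>u \<noteq> 0\<close> by (metis vec_eq_iff zero_index)
  then obtain e where "e \<in> Basis" "inner (u$i) e \<noteq> 0"
    using euclidean_all_zero_iff by blast
  define w where "w = (\<chi> j. inner (u$j) e)"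
  have "w \<noteq> 0"
    using \<open>inner (u$i) e \<noteq> 0\<close> by (metis vec_lambda_beta w_def zero_index)
  moreover have "(M *v w) $ j = (c *\<^sub>R w) $ j" for j
  proof -
    have "(M *v w) $ j = inner (kron_mult M u $ j) e"
      by (simp add: matrix_vector_mult_def w_def inner_sum_left)
    then show ?thesis
      by (simp add: eig w_def)
  qed
  ultimately show ?thesis
    unfolding is_eigenvalue_def by (metis vec_eq_iff)
qed

lemma inner_matrix_vector_symmetric:
  fixes M :: "real^'n^'n"
  assumes "\<And>i j. M$i$j = M$j$i"
  shows "inner (M *v v) w = inner v (M *v w)"
  using inner_kron_symmetric_commute[OF assms, of v w]
  by (simp add: inner_vec_def matrix_vector_mult_def)

text \<open>Eigenvectors of distinct eigenvalues of a symmetric matrix are orthogonal, and an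
  orthogonal family of nonzero vectors is finite.\<close>

lemma finite_eigenvalues_symmetric:
  fixes M :: "real^'n^'n"
  assumes sym: "\<And>i j. M$i$j = M$j$i"
  shows "finite {lam. is_eigenvalue M lam}"
proof -
  define E where "E = {lam. is_eigenvalue M lam}"
  define ev where "ev lam = (SOME v. v \<noteq> 0 \<and> M *v v = lam *\<^sub>R v)" for lam
  have ev: "ev lam \<noteq> 0" "M *v ev lam = lam *\<^sub>R ev lam" if "lam \<in> E" for lam
    using that someI_ex[of "\<lambda>v. v \<noteq> 0 \<and> M *v v = lam *\<^sub>R v"]
    unfolding E_def is_eigenvalue_def ev_def by auto
  have inj: "inj_on ev E"
  proof (rule inj_onI)
    fix a b assume "a \<in> E" "b \<in> E" "ev a = ev b"
    then have "a *\<^sub>R ev a = b *\<^sub>R ev a"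
      using ev by metis
    then show "a = b"
      using ev(1)[OF \<open>a \<in> E\<close>] by (simp add: scaleR_cancel_right)
  qed
  have "pairwise orthogonal (ev ` E)"
  proof (rule pairwiseI, clarify)
    fix a b assume ab: "a \<in> E" "b \<in> E" "ev a \<noteq> ev b"
    have "a * inner (ev a) (ev b) = inner (M *v ev a) (ev b)"
      using ev(2)[OF ab(1)] by simp
    also have "\<dots> = b * inner (ev a) (ev b)"
      using ev(2)[OF ab(2)] by (simp add: inner_matrix_vector_symmetric[OF sym])
    finally show "orthogonal (ev a) (ev b)"
      using ab(3) by (auto simp: orthogonal_def)
  qed
  then have "finite (ev ` E)"
    by (rule pairwise_orthogonal_imp_finite)
  then show ?thesis
    using inj finite_imageD unfolding E_def by blast
qed

lemma eigenvalue_le_rho: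
  "(\<And>i j. M$i$j = M$j$i) \<Longrightarrow> is_eigenvalue M lam \<Longrightarrow> lam \<le> rho M"
  unfolding rho_def using finite_eigenvalues_symmetric by (intro Max_ge) auto

lemma rho2_le_eigenvalue:
  assumes "\<And>i j. M$i$j = M$j$i" "is_eigenvalue M lam" "0 < lam"
  shows "rho2 M \<le> lam" and "0 < rho2 M"
proof -
  have fin: "finite {lam. is_eigenvalue M lam \<and> 0 < lam}"
    using finite_eigenvalues_symmetric[OF assms(1)] by (rule finite_subset[rotated]) auto
  show "rho2 M \<le> lam"
    unfolding rho2_def using fin assms(2,3) by (intro Min_le) auto
  have "rho2 M \<in> {lam. is_eigenvalue M lam \<and> 0 < lam}"
    unfolding rho2_def using fin assms(2,3) by (intro Min_in) auto
  then show "0 < rho2 M"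
    by simp
qed

lemma laplacian_top_eigenvalue:
  fixes A :: "real^'n^'n"
  assumes adj: "sym_nonneg_adj A"
  obtains M where "is_eigenvalue (laplacian A) M" "0 \<le> M"
    "\<And>z::('a::euclidean_space)^'n. inner z (kron_mult (laplacian A) z) \<le> M * (norm z)\<^sup>2"
proof -
  let ?L = "kron_mult (laplacian A) :: ('a::euclidean_space)^'n \<Rightarrow> _"
  have L: "psd_operator ?L"
    by (rule psd_operator_kron_laplacian[OF adj])
  obtain y0 :: "'a^'n" where "y0 \<noteq> 0"
    using exists_nonzero_vec by blast
  then obtain u where u: "norm u = 1"
    and umax: "\<And>y. inner y (?L y) \<le> inner u (?L u) * (norm y)\<^sup>2"
    using rayleigh_min_attained[of "\<lambda>z. - ?L z" "\<lambda>_. 0::real" y0]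
      linear_compose_neg[OF psd_operator_linear[OF L]] linear_zero by auto
  define M where "M = inner u (?L u)"
  have bound: "inner y (?L y) \<le> M * (norm y)\<^sup>2" for y
    using umax[of y] by (simp add: M_def)
  have "psd_operator (\<lambda>z. M *\<^sub>R z - ?L z)"
    using bound psd_operator_commute[OF L]
    by (intro psd_operator_diffI linear_scaleR psd_operator_linear[OF L]) (auto simp: power2_norm_eq_inner)
  moreover have "inner u (M *\<^sub>R u - ?L u) = 0"
    using u by (simp add: inner_diff_right M_def power2_norm_eq_inner[symmetric])
  ultimately have "?L u = M *\<^sub>R u"
    using psd_operator_kernel by fastforce
  then have "is_eigenvalue (laplacian A) M"
    by (rule is_eigenvalue_kron_mult) (use u in auto)
  moreover have "0 \<le> M"
    unfolding M_def by (rule psd_operator_nonneg[OF L])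
  ultimately show ?thesis
    using that bound by blast
qed

lemma rho_laplacian_nonneg: "sym_nonneg_adj A \<Longrightarrow> 0 \<le> rho (laplacian A)"
  by (metis laplacian_top_eigenvalue eigenvalue_le_rho laplacian_symmetric order_trans)

lemma kron_laplacian_quadratic_le_rho:
  fixes z :: "('a::euclidean_space)^'n"
  assumes adj: "sym_nonneg_adj A"
  shows "inner z (kron_mult (laplacian A) z) \<le> rho (laplacian A) * (norm z)\<^sup>2"
proof -
  obtain M where "is_eigenvalue (laplacian A) M"
    and "\<And>z::'a^'n. inner z (kron_mult (laplacian A) z) \<le> M * (norm z)\<^sup>2"
    using laplacian_top_eigenvalue[OF adj] by blast
  moreover have "M \<le> rho (laplacian A)"
    using eigenvalue_le_rho laplacian_symmetric[OF adj] calculation(1) by blast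
  ultimately show ?thesis
    by (meson mult_right_mono order_trans zero_le_power2)
qed

text \<open>The smallest Rayleigh quotient on the disagreement subspace is an eigenvalue, positive
  because the kernel of the Laplacian consists of consensus vectors.\<close>

lemma laplacian_least_positive_eigenvalue:
  fixes A :: "real^'n^'n"
  assumes adj: "sym_nonneg_adj A" and con: "graph_connected A" and card: "2 \<le> CARD('n)"
  obtains m where "is_eigenvalue (laplacian A) m" "0 < m"
    "\<And>z::('a::euclidean_space)^'n. m * (norm (Kproj z))\<^sup>2 \<le> inner z (kron_mult (laplacian A) z)"
proof -
  let ?L = "kron_mult (laplacian A) :: ('a::euclidean_space)^'n \<Rightarrow> _"
  have L: "psd_operator ?L"
    by (rule psd_operator_kron_laplacian[OF adj])
  obtain y0 :: "'a^'n" where "y0 \<noteq> 0" "Hproj y0 = 0"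
    using exists_nonzero_Hproj_eq_0[OF card] by blast
  then obtain u where u: "norm u = 1" "Hproj u = 0"
    and umin: "\<And>y. Hproj y = 0 \<Longrightarrow> inner u (?L u) * (norm y)\<^sup>2 \<le> inner y (?L y)"
    using rayleigh_min_attained[OF psd_operator_linear[OF L] linear_Hproj] by blast
  define m where "m = inner u (?L u)"
  have bound: "m * (norm (Kproj y))\<^sup>2 \<le> inner y (?L y)" for y
    using umin[of "Kproj y"] psd_operator_commute[OF L, of "Kproj y"]
    by (simp add: m_def kron_laplacian_Kproj inner_Kproj_commute Kproj_kron_laplacian[OF adj])
  have "psd_operator (\<lambda>z. ?L z - m *\<^sub>R Kproj z)"
  proof (rule psd_operator_diffI)
    show "inner (m *\<^sub>R Kproj x) y = inner x (m *\<^sub>R Kproj y)" for x y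
      by (simp add: inner_Kproj_commute)
    show "inner x (m *\<^sub>R Kproj x) \<le> inner x (?L x)" for x
      using bound[of x] inner_Kproj_commute[of x "Kproj x"] by (simp add: power2_norm_eq_inner)
  qed (use L in \<open>auto intro: linear_compose_scale_right linear_Kproj psd_operator_linear
      psd_operator_commute\<close>)
  moreover have "Kproj u = u"
    by (rule Kproj_eq_self[OF u(2)])
  moreover have "inner u (?L u - m *\<^sub>R Kproj u) = 0"
    using u calculation(2) by (simp add: inner_diff_right m_def power2_norm_eq_inner[symmetric])
  ultimately have Lu: "?L u = m *\<^sub>R u"
    using psd_operator_kernel by fastforce
  then have "is_eigenvalue (laplacian A) m"
    by (rule is_eigenvalue_kron_mult) (use u in auto)
  moreover have "m \<noteq> 0"
    using kron_laplacian_eq_0_imp_Kproj[OF adj con, of u] Lu u \<open>Kproj u = u\<close> by auto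
  then have "0 < m"
    using psd_operator_nonneg[OF L, of u] by (simp add: m_def)
  ultimately show ?thesis
    using that bound by blast
qed

lemma rho2_laplacian_pos:
  "sym_nonneg_adj A \<Longrightarrow> graph_connected A \<Longrightarrow> 2 \<le> CARD('n) \<Longrightarrow> 0 < rho2 (laplacian (A :: real^'n^'n))"
  by (metis laplacian_least_positive_eigenvalue laplacian_symmetric rho2_le_eigenvalue(2))

lemma kron_laplacian_quadratic_ge_rho2:
  fixes z :: "('a::euclidean_space)^'n"
  assumes adj: "sym_nonneg_adj A" and con: "graph_connected A" and card: "2 \<le> CARD('n)"
  shows "rho2 (laplacian A) * (norm (Kproj z))\<^sup>2 \<le> inner z (kron_mult (laplacian A) z)"
proof -
  obtain m where "is_eigenvalue (laplacian A) m" "0 < m"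
    and "\<And>z::'a^'n. m * (norm (Kproj z))\<^sup>2 \<le> inner z (kron_mult (laplacian A) z)"
    using laplacian_least_positive_eigenvalue[OF adj con card] by blast
  moreover have "rho2 (laplacian A) \<le> m"
    using rho2_le_eigenvalue(1) laplacian_symmetric[OF adj] calculation(1,2) by blast
  ultimately show ?thesis
    by (meson mult_right_mono order_trans zero_le_power2)
qed

lemma norm_kron_laplacian_le:
  fixes z :: "('a::euclidean_space)^'n"
  assumes adj: "sym_nonneg_adj A"
  shows "(norm (kron_mult (laplacian A) z))\<^sup>2 \<le> (rho (laplacian A))\<^sup>2 * (norm z)\<^sup>2"
proof -
  let ?L = "kron_mult (laplacian A) :: ('a::euclidean_space)^'n \<Rightarrow> _"
  let ?r = "rho (laplacian A)"
  have L: "psd_operator ?L"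
    by (rule psd_operator_kron_laplacian[OF adj])
  define w where "w = ?L z"
  have "((norm w)\<^sup>2)\<^sup>2 = (inner w (?L z))\<^sup>2"
    by (simp add: w_def power2_norm_eq_inner)
  also have "\<dots> \<le> inner w (?L w) * inner z (?L z)"
    by (rule psd_operator_cauchy_schwarz[OF L])
  also have "\<dots> \<le> (?r * (norm w)\<^sup>2) * (?r * (norm z)\<^sup>2)"
    using kron_laplacian_quadratic_le_rho[OF adj] psd_operator_nonneg[OF L]
      rho_laplacian_nonneg[OF adj]
    by (intro mult_mono) auto
  finally have le: "(norm w)\<^sup>2 * (norm w)\<^sup>2 \<le> (norm w)\<^sup>2 * (?r\<^sup>2 * (norm z)\<^sup>2)"
    by (simp add: algebra_simps power2_eq_square)
  show ?thesis
  proof (cases "w = 0")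
    case False
    then have "0 < (norm w)\<^sup>2"
      by simp
    with le show ?thesis
      by (simp only: mult_le_cancel_left_pos w_def)
  qed (simp add: w_def)
qed

lemma kron_laplacian_plus_Hproj_inverse:
  fixes A :: "real^'n^'n"
  assumes adj: "sym_nonneg_adj A" and con: "graph_connected A"
  obtains G :: "('a::euclidean_space)^'n \<Rightarrow> 'a^'n" where "linear G"
    "\<And>z. kron_mult (laplacian A) (G z) + Hproj (G z) = z"
proof -
  let ?F = "\<lambda>z::'a^'n. kron_mult (laplacian A) z + Hproj z"
  have lin: "linear ?F"
    by (intro linear_compose_add linear_kron_mult linear_Hproj)
  have "inj ?F"
  proof (rule linear_injective_0[OF lin, THEN iffD2], intro allI impI)
    fix z assume Fz: "?F z = 0"
    have "Hproj (?F z) = Hproj z"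
      by (simp add: linear_add[OF linear_Hproj] Hproj_kron_laplacian[OF adj])
    then have "Hproj z = 0"
      by (simp add: Fz linear_0[OF linear_Hproj])
    moreover have "Kproj z = 0"
      using Fz calculation by (intro kron_laplacian_eq_0_imp_Kproj[OF adj con]) simp
    ultimately show "z = 0"
      by (simp add: Kproj_def)
  qed
  then show ?thesis
    using that linear_injective_isomorphism[OF lin] by blast
qed

text \<open>A pseudo-inverse of \<open>L \<otimes> I\<^sub>p\<close> on the disagreement subspace: \<open>Q = K (L \<otimes> I\<^sub>p + H)\<^sup>-\<^sup>1\<close>.\<close>

lemma kron_laplacian_pseudo_inverse:
  fixes A :: "real^'n^'n"
  assumes adj: "sym_nonneg_adj A" and con: "graph_connected A"
  obtains Q :: "('a::euclidean_space)^'n \<Rightarrow> 'a^'n" where "psd_operator Q"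
    "\<And>z. Q (kron_mult (laplacian A) z) = Kproj z"
    "\<And>z. kron_mult (laplacian A) (Q z) = Kproj z"
    "\<And>z. Kproj (Q z) = Q z"
proof -
  let ?L = "kron_mult (laplacian A) :: 'a^'n \<Rightarrow> _"
  have L: "psd_operator ?L"
    by (rule psd_operator_kron_laplacian[OF adj])
  obtain G :: "'a^'n \<Rightarrow> _" where linG: "linear G" and G: "\<And>z. ?L (G z) + Hproj (G z) = z"
    using kron_laplacian_plus_Hproj_inverse[OF adj con] by blast
  define Q where "Q z = G (Kproj z)" for z
  have HQ: "Hproj (Q z) = 0" for z
    using arg_cong[OF G[of "Kproj z"], of Hproj]
    by (simp add: Q_def linear_add[OF linear_Hproj] Hproj_kron_laplacian[OF adj])
  then have KQ: "Kproj (Q z) = Q z" for z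
    by (rule Kproj_eq_self)
  have LQ: "?L (Q z) = Kproj z" for z
    using G[of "Kproj z"] HQ[of z] by (simp add: Q_def)
  have inner_Q: "inner x (Q y) = inner (?L (Q x)) (Q y)" for x y
    by (metis KQ LQ inner_Kproj_commute)
  have "psd_operator Q"
  proof (rule psd_operatorI)
    show "linear Q"
      unfolding Q_def[abs_def] using linear_compose[OF linear_Kproj linG] by (simp add: o_def)
    show "inner (Q x) y = inner x (Q y)" for x y
      by (metis inner_Q inner_commute psd_operator_commute[OF L])
    show "0 \<le> inner x (Q x)" for x
      using inner_Q[of x x] psd_operator_nonneg[OF L, of "Q x"] by (simp add: inner_commute)
  qed
  moreover have "Q (?L z) = Kproj z" for z
  proof -
    have "?L (Q (?L z) - z) = 0"
      using LQ[of "?L z"] by (simp add: linear_diff[OF linear_kron_mult] Kproj_kron_laplacian[OF adj])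
    then have "Kproj (Q (?L z) - z) = 0"
      by (rule kron_laplacian_eq_0_imp_Kproj[OF adj con])
    then show ?thesis
      by (simp add: linear_diff[OF linear_Kproj] KQ)
  qed
  ultimately show ?thesis
    using that LQ KQ by blast
qed

lemma le_square_div_of_bounds:
  fixes r s t k :: real
  assumes "0 < r" "0 \<le> t" "r * s\<^sup>2 \<le> t" "t \<le> s * k"
  shows "t \<le> k\<^sup>2 / r"
proof (cases "t = 0")
  case False
  have "t\<^sup>2 \<le> s\<^sup>2 * k\<^sup>2"
    using power_mono[OF assms(4,2), of 2] by (simp add: power_mult_distrib)
  also have "\<dots> \<le> (t / r) * k\<^sup>2"
    using assms(1,3) by (intro mult_right_mono) (simp_all add: le_divide_eq mult.commute)
  finally have "t * t \<le> t * (k\<^sup>2 / r)"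
    by (simp add: power2_eq_square)
  moreover have "0 < t"
    using False assms(2) by simp
  ultimately show ?thesis
    by (simp only: mult_le_cancel_left_pos)
qed (use assms(1) in simp)

text \<open>Since \<open>L (Q z) = K z\<close>, the energy \<open>z \<bullet> Q z\<close> equals \<open>s \<bullet> L s\<close> for \<open>s = Q z\<close>; it is squeezed
  between \<open>\<rho>\<^sub>2 \<parallel>s\<parallel>\<^sup>2\<close> and \<open>\<parallel>s\<parallel> \<parallel>K z\<parallel>\<close>.\<close>

lemma pseudo_inverse_quadratic_le:
  fixes A :: "real^'n^'n" and Q :: "('a::euclidean_space)^'n \<Rightarrow> 'a^'n"
  assumes adj: "sym_nonneg_adj A" and con: "graph_connected A" and card: "2 \<le> CARD('n)"
    and Q: "psd_operator Q" "\<And>z. kron_mult (laplacian A) (Q z) = Kproj z" "\<And>z. Kproj (Q z) = Q z"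
  shows "inner z (Q z) \<le> (norm (Kproj z))\<^sup>2 / rho2 (laplacian A)"
proof -
  define s where "s = Q z"
  have "inner z (Q z) = inner z (Kproj s)"
    by (simp add: s_def Q(3))
  also have "\<dots> = inner (Kproj z) s"
    by (simp add: inner_Kproj_commute)
  also have "\<dots> = inner s (kron_mult (laplacian A) s)"
    by (simp add: s_def Q(2) inner_commute)
  finally have energy: "inner z (Q z) = inner s (kron_mult (laplacian A) s)" .
  show ?thesis
  proof (rule le_square_div_of_bounds)
    show "0 < rho2 (laplacian A)"
      by (rule rho2_laplacian_pos[OF adj con card])
    show "0 \<le> inner z (Q z)"
      by (rule psd_operator_nonneg[OF Q(1)])
    show "rho2 (laplacian A) * (norm s)\<^sup>2 \<le> inner z (Q z)"
      using kron_laplacian_quadratic_ge_rho2[OF adj con card, of s] Q(3) by (simp add: energy s_def)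
    show "inner z (Q z) \<le> norm s * norm (Kproj z)"
      using norm_cauchy_schwarz[of s "kron_mult (laplacian A) s"] by (simp add: energy s_def Q(2))
  qed
qed

section \<open>Elementary inequalities\<close>

text \<open>The descent lemma, in the weak form with constant \<open>Lf\<close> instead of \<open>Lf/2\<close>.\<close>

lemma descent_lemma:
  fixes F :: "'a::real_inner \<Rightarrow> real"
  assumes der: "\<And>y. (F has_derivative (\<lambda>h. G y \<bullet> h)) (at y)"
    and lip: "\<And>y z. norm (G y - G z) \<le> Lf * norm (y - z)" and "0 \<le> Lf"
  shows "F y \<le> F x + G x \<bullet> (y - x) + Lf * (norm (y - x))\<^sup>2"
proof -
  define d where "d = y - x"
  define phi where "phi t = F (x + t *\<^sub>R d)" for t :: real
  have dphi: "(phi has_derivative (\<lambda>s. G (x + t *\<^sub>R d) \<bullet> (s *\<^sub>R d))) (at t within {0..1})" for t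
  proof -
    have "((\<lambda>t. x + t *\<^sub>R d) has_derivative (\<lambda>s. s *\<^sub>R d)) (at t within {0..1})"
      by (auto intro!: derivative_eq_intros)
    from has_derivative_in_compose[OF this der[THEN has_derivative_at_withinI]]
    show ?thesis
      unfolding phi_def o_def by simp
  qed
  obtain s where s: "s \<in> {0<..<1}" and eq: "phi 1 - phi 0 = G (x + s *\<^sub>R d) \<bullet> ((1 - 0) *\<^sub>R d)"
    using mvt_simple[of 0 1 phi, OF zero_less_one dphi] by blast
  have "Lf * (s * norm d) \<le> Lf * norm d"
    using s \<open>0 \<le> Lf\<close> by (intro mult_left_mono) (auto intro: mult_left_le_one_le)
  then have "norm (G (x + s *\<^sub>R d) - G x) \<le> Lf * norm d"
    using lip[of "x + s *\<^sub>R d" x] s by simp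
  then have "(G (x + s *\<^sub>R d) - G x) \<bullet> d \<le> Lf * (norm d)\<^sup>2"
    by (metis mult_right_mono norm_cauchy_schwarz norm_ge_zero order_trans power2_eq_square mult.assoc)
  then show ?thesis
    using eq by (simp add: phi_def d_def inner_diff_left)
qed

lemma young_inner_le:
  fixes x y :: "'a::real_inner"
  assumes "0 < c"
  shows "inner x y \<le> (c / 2) * (norm x)\<^sup>2 + (1 / (2 * c)) * (norm y)\<^sup>2"
proof -
  have "0 \<le> (norm (c *\<^sub>R x - y))\<^sup>2 / (2 * c)"
    using assms by simp
  also have "\<dots> = (c / 2) * (norm x)\<^sup>2 + (1 / (2 * c)) * (norm y)\<^sup>2 - inner x y"
    using assms unfolding power2_norm_eq_inner
    by (simp add: inner_diff_left inner_diff_right inner_commute[of y x] field_simps power2_eq_square)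
  finally show ?thesis
    by simp
qed

lemma young_inner_le_scaled:
  fixes x y :: "'a::real_inner"
  assumes "0 < c" "(norm y)\<^sup>2 \<le> c\<^sup>2 * B"
  shows "inner x y \<le> c / 2 * ((norm x)\<^sup>2 + B)"
proof -
  have "1 / (2 * c) * (norm y)\<^sup>2 \<le> 1 / (2 * c) * (c\<^sup>2 * B)"
    using assms by (intro mult_left_mono) auto
  also have "\<dots> = c / 2 * B"
    using assms by (simp add: power2_eq_square)
  finally show ?thesis
    using young_inner_le[OF assms(1), of x y] by (simp add: algebra_simps)
qed

lemma norm_add_sq_le:
  fixes x y :: "'a::real_inner"
  assumes "0 < s"
  shows "(norm (x + y))\<^sup>2 \<le> (1 + s) * (norm x)\<^sup>2 + (1 + 1 / s) * (norm y)\<^sup>2"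
  using young_inner_le[OF assms, of x y] assms
  by (simp add: power2_norm_eq_inner inner_add_left inner_add_right inner_commute[of y x]
      field_simps)

lemma norm_add4_sq_le:
  fixes x1 x2 x3 x4 :: "'a::real_inner"
  shows "(norm (x1 + x2 + x3 + x4))\<^sup>2
    \<le> (10/3) * (norm x1)\<^sup>2 + 4 * (norm x2)\<^sup>2 + 5 * (norm x3)\<^sup>2 + 4 * (norm x4)\<^sup>2"
proof -
  have "x1 + x2 + x3 + x4 = (x1 + x3) + (x2 + x4)"
    by (simp add: algebra_simps)
  then show ?thesis
    unfolding \<open>x1 + x2 + x3 + x4 = (x1 + x3) + (x2 + x4)\<close>
    using norm_add_sq_le[of 1 "x1 + x3" "x2 + x4"] norm_add_sq_le[of "2/3" x1 x3]
      norm_add_sq_le[of 1 x2 x4]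
    by simp
qed

section \<open>One step of the Lyapunov analysis\<close>

text \<open>The Lyapunov function of the paper, evaluated at \<open>a = K x\<^sub>k\<close>,
  \<open>b = K(v\<^sub>k + g\<^sup>0\<^sub>k / \<beta>)\<close> and \<open>F = n (f(x\<^sub>k) - f\<^sup>*)\<close>.\<close>

definition lyapunov :: "('v::real_inner \<Rightarrow> 'v) \<Rightarrow> real \<Rightarrow> real \<Rightarrow> 'v \<Rightarrow> 'v \<Rightarrow> real \<Rightarrow> real" where
  "lyapunov Q alpha beta a b F =
    (1/2) * (norm a)\<^sup>2 + (1/2) * inner b (Q b) + alpha / (2 * beta) * (norm b)\<^sup>2 + inner a b + F"

lemma lyapunov_increment_eq:
  fixes a b u w :: "'v::real_inner"
  assumes Q: "psd_operator Q" and "beta \<noteq> 0"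
  shows "lyapunov Q alpha beta (a - eta *\<^sub>R u) (b + w) F' - lyapunov Q alpha beta a b F
    = (- eta * inner a u - eta * inner u b + inner (Q b) w + (alpha / beta) * inner b w + inner a w)
      + ((1/2) * (norm (eta *\<^sub>R u - w))\<^sup>2 + (1/2) * inner w (Q w)
         + ((alpha - beta) / (2 * beta)) * (norm w)\<^sup>2)
      + (F' - F)"
proof -
  have sq_diff: "(norm (x - y))\<^sup>2 = (norm x)\<^sup>2 - 2 * inner x y + (norm y)\<^sup>2" for x y :: 'v
    by (simp add: power2_norm_eq_inner inner_diff_left inner_diff_right inner_commute[of y x])
  have "(norm (b + w))\<^sup>2 = (norm b)\<^sup>2 + 2 * inner b w + (norm w)\<^sup>2"
    by (simp add: power2_norm_eq_inner inner_add_left inner_add_right inner_commute[of w b])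
  moreover have "inner (a - eta *\<^sub>R u) (b + w) = inner a b + inner a w - eta * inner u b - eta * inner u w"
    by (simp add: inner_diff_left inner_add_right algebra_simps)
  moreover have "((alpha - beta) / (2 * beta)) * (norm w)\<^sup>2
      = alpha / (2 * beta) * (norm w)\<^sup>2 - 1/2 * (norm w)\<^sup>2"
    "alpha / (2 * beta) * (2 * inner b w) = (alpha / beta) * inner b w"
    using \<open>beta \<noteq> 0\<close> by (simp_all add: field_simps)
  ultimately show ?thesis
    unfolding lyapunov_def psd_operator_quadratic_add[OF Q] sq_diff
    by (simp add: power_mult_distrib inner_commute[of u a] algebra_simps)
qed

lemma consensus_terms_le:
  fixes a b l d :: "'v::real_inner"
  assumes "0 < eta" "beta \<le> alpha" "lmin * (norm a)\<^sup>2 \<le> inner a l" "norm d \<le> Lf * norm a"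
  shows "- eta * (alpha - beta) * inner a l - eta * inner a d - eta * inner d b
    \<le> eta * (1/2 + Lf\<^sup>2 - (alpha - beta) * lmin) * (norm a)\<^sup>2 + eta / 2 * (norm b)\<^sup>2"
proof -
  have "(norm d)\<^sup>2 \<le> Lf\<^sup>2 * (norm a)\<^sup>2"
    using power_mono[OF assms(4) norm_ge_zero, of 2] by (simp add: power_mult_distrib)
  moreover have "- inner a d \<le> 1/2 * (norm a)\<^sup>2 + 1/2 * (norm d)\<^sup>2"
    using young_inner_le[of 1 a "- d"] by simp
  moreover have "- inner d b \<le> 1/2 * (norm b)\<^sup>2 + 1/2 * (norm d)\<^sup>2"
    using young_inner_le[of 1 b "- d"] by (simp add: inner_commute)
  moreover have "(alpha - beta) * (lmin * (norm a)\<^sup>2) \<le> (alpha - beta) * inner a l"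
    using assms(2,3) by (intro mult_left_mono) auto
  moreover have "(1/2 + Lf\<^sup>2 - (alpha - beta) * lmin) * (norm a)\<^sup>2
      = 1/2 * (norm a)\<^sup>2 + Lf\<^sup>2 * (norm a)\<^sup>2 - (alpha - beta) * (lmin * (norm a)\<^sup>2)"
    by (simp add: algebra_simps)
  ultimately have "- (alpha - beta) * inner a l - inner a d - inner d b
      \<le> (1/2 + Lf\<^sup>2 - (alpha - beta) * lmin) * (norm a)\<^sup>2 + 1/2 * (norm b)\<^sup>2"
    by linarith
  from mult_left_mono[OF this less_imp_le[OF assms(1)]] show ?thesis
    by (simp add: algebra_simps)
qed

lemma gradient_drift_terms_le:
  fixes a b D g :: "'v::real_inner"
  assumes Q: "psd_operator Q" "inner b (Q b) \<le> (norm b)\<^sup>2 / lmin" "inner D (Q D) \<le> (norm D)\<^sup>2 / lmin"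
    and D: "norm D \<le> eta * Lf * norm g"
    and pos: "0 < eta" "0 < beta" "0 < lmin" "0 \<le> alpha"
  shows "(1/beta) * inner (Q b) D + (alpha / beta\<^sup>2) * inner b D + (1/beta) * inner a D
    \<le> eta / 2 * (norm a)\<^sup>2 + eta * (1 / (2 * beta * lmin) + alpha / (2 * beta\<^sup>2)) * (norm b)\<^sup>2
      + eta * Lf\<^sup>2 / (2 * beta) * (1 / beta + 1 / lmin + alpha / beta) * (norm g)\<^sup>2"
proof -
  have DD: "(norm D)\<^sup>2 \<le> eta\<^sup>2 * (Lf\<^sup>2 * (norm g)\<^sup>2)"
    using power_mono[OF D norm_ge_zero, of 2] by (simp add: power_mult_distrib)
  have QD: "inner D (Q D) \<le> eta\<^sup>2 * (Lf\<^sup>2 * (norm g)\<^sup>2) / lmin"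
    using order_trans[OF Q(3) divide_right_mono[OF DD less_imp_le[OF pos(3)]]] by simp
  have "2 * eta * inner (Q b) D \<le> eta\<^sup>2 * inner b (Q b) + inner D (Q D)"
    using psd_operator_cross_le[OF Q(1), of "eta *\<^sub>R b" D]
    by (simp add: linear_scale[OF psd_operator_linear[OF Q(1)]] power2_eq_square)
  also have "\<dots> \<le> eta\<^sup>2 * ((norm b)\<^sup>2 / lmin) + eta\<^sup>2 * (Lf\<^sup>2 * (norm g)\<^sup>2) / lmin"
    using Q(2) QD by (intro add_mono mult_left_mono) auto
  finally have "eta * (2 * inner (Q b) D)
      \<le> eta * (eta * ((norm b)\<^sup>2 / lmin) + eta * (Lf\<^sup>2 * (norm g)\<^sup>2) / lmin)"
    by (simp add: power2_eq_square algebra_simps)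
  then have QbD: "inner (Q b) D \<le> (eta * ((norm b)\<^sup>2 / lmin) + eta * (Lf\<^sup>2 * (norm g)\<^sup>2) / lmin) / 2"
    using pos by (simp only: mult_le_cancel_left_pos) (simp add: field_simps)
  have bD: "inner b D \<le> eta / 2 * ((norm b)\<^sup>2 + Lf\<^sup>2 * (norm g)\<^sup>2)"
    using DD pos by (intro young_inner_le_scaled) auto
  have "(norm D)\<^sup>2 \<le> (eta * beta)\<^sup>2 * (Lf\<^sup>2 * (norm g)\<^sup>2 / beta\<^sup>2)"
    using DD pos by (simp add: power_mult_distrib)
  then have aD: "inner a D \<le> (eta * beta) / 2 * ((norm a)\<^sup>2 + Lf\<^sup>2 * (norm g)\<^sup>2 / beta\<^sup>2)"
    using pos by (intro young_inner_le_scaled) auto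
  have "(1/beta) * inner (Q b) D + (alpha / beta\<^sup>2) * inner b D + (1/beta) * inner a D
      \<le> (1/beta) * ((eta * ((norm b)\<^sup>2 / lmin) + eta * (Lf\<^sup>2 * (norm g)\<^sup>2) / lmin) / 2)
        + (alpha / beta\<^sup>2) * (eta / 2 * ((norm b)\<^sup>2 + Lf\<^sup>2 * (norm g)\<^sup>2))
        + (1/beta) * ((eta * beta) / 2 * ((norm a)\<^sup>2 + Lf\<^sup>2 * (norm g)\<^sup>2 / beta\<^sup>2))"
    using QbD bD aD pos by (intro add_mono mult_left_mono) auto
  also have "\<dots> = eta / 2 * (norm a)\<^sup>2 + eta * (1 / (2 * beta * lmin) + alpha / (2 * beta\<^sup>2)) * (norm b)\<^sup>2
      + eta * Lf\<^sup>2 / (2 * beta) * (1 / beta + 1 / lmin + alpha / beta) * (norm g)\<^sup>2"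
    using pos by (simp add: field_simps power2_eq_square)
  finally show ?thesis .
qed

lemma objective_terms_le:
  fixes a g g0 :: "'v::real_inner"
  assumes "F' - F \<le> - eta * inner g0 g + eta\<^sup>2 * Lf * (norm g)\<^sup>2"
    and "norm (g - g0) \<le> Lf * norm a" and "0 < eta"
  shows "F' - F \<le> eta / 2 * Lf\<^sup>2 * (norm a)\<^sup>2 - eta / 2 * (norm g)\<^sup>2 - eta / 2 * (norm g0)\<^sup>2
    + eta\<^sup>2 * Lf * (norm g)\<^sup>2"
proof -
  have "(norm (g - g0))\<^sup>2 \<le> Lf\<^sup>2 * (norm a)\<^sup>2"
    using power_mono[OF assms(2) norm_ge_zero, of 2] by (simp add: power_mult_distrib)
  moreover have "(norm (g - g0))\<^sup>2 = (norm g)\<^sup>2 - 2 * inner g0 g + (norm g0)\<^sup>2"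
    by (simp add: power2_norm_eq_inner inner_diff_left inner_diff_right inner_commute[of g g0])
  ultimately have "- inner g0 g \<le> 1/2 * Lf\<^sup>2 * (norm a)\<^sup>2 - 1/2 * (norm g)\<^sup>2 - 1/2 * (norm g0)\<^sup>2"
    by linarith
  from mult_left_mono[OF this less_imp_le[OF assms(3)]] assms(1) show ?thesis
    by (simp add: algebra_simps)
qed

lemma primal_step_sq_le:
  fixes a b l d D g :: "'v::real_inner"
  assumes "(norm l)\<^sup>2 \<le> lmax\<^sup>2 * (norm a)\<^sup>2" "norm d \<le> Lf * norm a" "norm D \<le> eta * Lf * norm g"
    and "0 < beta"
  shows "(1/2) * (norm (eta *\<^sub>R (alpha *\<^sub>R l + beta *\<^sub>R b + d) - ((eta * beta) *\<^sub>R l + (1/beta) *\<^sub>R D)))\<^sup>2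
    \<le> eta\<^sup>2 * (5/3 * (alpha - beta)\<^sup>2 * lmax\<^sup>2 + 5/2 * Lf\<^sup>2) * (norm a)\<^sup>2 + 2 * eta\<^sup>2 * beta\<^sup>2 * (norm b)\<^sup>2
      + 2 * eta\<^sup>2 * Lf\<^sup>2 / beta\<^sup>2 * (norm g)\<^sup>2"
proof -
  define T where "T = eta\<^sup>2 * (5/3 * (alpha - beta)\<^sup>2 * lmax\<^sup>2 + 5/2 * Lf\<^sup>2) * (norm a)\<^sup>2
    + 2 * eta\<^sup>2 * beta\<^sup>2 * (norm b)\<^sup>2 + 2 * eta\<^sup>2 * Lf\<^sup>2 / beta\<^sup>2 * (norm g)\<^sup>2"
  have "(norm (eta *\<^sub>R (alpha *\<^sub>R l + beta *\<^sub>R b + d) - ((eta * beta) *\<^sub>R l + (1/beta) *\<^sub>R D)))\<^sup>2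
      = (norm ((eta * (alpha - beta)) *\<^sub>R l + (eta * beta) *\<^sub>R b + eta *\<^sub>R d + (- 1 / beta) *\<^sub>R D))\<^sup>2"
    by (rule arg_cong[where f = "\<lambda>v. (norm v)\<^sup>2"]) (simp add: algebra_simps)
  also have "\<dots> \<le> (10/3) * (norm ((eta * (alpha - beta)) *\<^sub>R l))\<^sup>2 + 4 * (norm ((eta * beta) *\<^sub>R b))\<^sup>2
      + 5 * (norm (eta *\<^sub>R d))\<^sup>2 + 4 * (norm ((- 1 / beta) *\<^sub>R D))\<^sup>2"
    by (rule norm_add4_sq_le)
  also have "\<dots> = (10/3) * (eta * (alpha - beta))\<^sup>2 * (norm l)\<^sup>2 + 4 * (eta * beta)\<^sup>2 * (norm b)\<^sup>2
        + 5 * eta\<^sup>2 * (norm d)\<^sup>2 + 4 * (1 / beta)\<^sup>2 * (norm D)\<^sup>2"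
    by (simp add: power_mult_distrib power_divide)
  also have "\<dots> \<le> (10/3) * (eta * (alpha - beta))\<^sup>2 * (lmax\<^sup>2 * (norm a)\<^sup>2) + 4 * (eta * beta)\<^sup>2 * (norm b)\<^sup>2
      + 5 * eta\<^sup>2 * (Lf\<^sup>2 * (norm a)\<^sup>2) + 4 * (1 / beta)\<^sup>2 * (eta\<^sup>2 * Lf\<^sup>2 * (norm g)\<^sup>2)"
    using power_mono[OF assms(2) norm_ge_zero, of 2] power_mono[OF assms(3) norm_ge_zero, of 2] assms(1)
    by (intro add_mono mult_left_mono order_refl) (auto simp: power_mult_distrib)
  also have "\<dots> = 2 * T"
    by (simp add: T_def power_mult_distrib power_divide field_simps power2_eq_square)
  finally show ?thesis
    unfolding T_def[symmetric] by linarith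
qed

lemma dual_step_sq_le:
  fixes a l D g :: "'v::real_inner"
  assumes Q: "psd_operator Q" "Q l = a" "inner D (Q D) \<le> (norm D)\<^sup>2 / lmin"
    and spectral: "inner a l \<le> lmax * (norm a)\<^sup>2" "(norm l)\<^sup>2 \<le> lmax\<^sup>2 * (norm a)\<^sup>2"
    and D: "norm D \<le> eta * Lf * norm g"
    and pos: "0 < beta" "beta \<le> alpha" "0 < lmin"
  defines "w \<equiv> (eta * beta) *\<^sub>R l + (1/beta) *\<^sub>R D"
  shows "(1/2) * inner w (Q w) + ((alpha - beta) / (2 * beta)) * (norm w)\<^sup>2
    \<le> eta\<^sup>2 * (beta\<^sup>2 * lmax + (alpha - beta) * beta * lmax\<^sup>2) * (norm a)\<^sup>2
      + eta\<^sup>2 * Lf\<^sup>2 / beta\<^sup>2 * (1 / lmin + (alpha - beta) / beta) * (norm g)\<^sup>2"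
proof -
  have DD: "(norm D)\<^sup>2 \<le> eta\<^sup>2 * Lf\<^sup>2 * (norm g)\<^sup>2"
    using power_mono[OF D norm_ge_zero, of 2] by (simp add: power_mult_distrib)
  have QD: "inner D (Q D) \<le> eta\<^sup>2 * Lf\<^sup>2 * (norm g)\<^sup>2 / lmin"
    using order_trans[OF Q(3) divide_right_mono[OF DD less_imp_le[OF pos(3)]]] .
  have "inner w (Q w) \<le> 2 * (eta * beta)\<^sup>2 * inner l a + 2 * (1/beta)\<^sup>2 * inner D (Q D)"
    using psd_operator_add_le[OF Q(1), of "(eta * beta) *\<^sub>R l" "(1/beta) *\<^sub>R D"]
    unfolding w_def psd_operator_quadratic_scale[OF Q(1)] Q(2) by (simp add: mult.assoc)
  also have "\<dots> \<le> 2 * (eta * beta)\<^sup>2 * (lmax * (norm a)\<^sup>2) + 2 * (1/beta)\<^sup>2 * (eta\<^sup>2 * Lf\<^sup>2 * (norm g)\<^sup>2 / lmin)"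
    using spectral(1) QD by (intro add_mono mult_left_mono) (auto simp: inner_commute)
  finally have S2: "(1/2) * inner w (Q w) \<le> eta\<^sup>2 * beta\<^sup>2 * lmax * (norm a)\<^sup>2 + eta\<^sup>2 * Lf\<^sup>2 / (beta\<^sup>2 * lmin) * (norm g)\<^sup>2"
    by (simp add: power_mult_distrib power_divide field_simps)
  have "(norm w)\<^sup>2 \<le> 2 * (eta * beta)\<^sup>2 * (norm l)\<^sup>2 + 2 * (1/beta)\<^sup>2 * (norm D)\<^sup>2"
    using norm_add_sq_le[of 1 "(eta * beta) *\<^sub>R l" "(1/beta) *\<^sub>R D"]
    by (simp add: w_def power_mult_distrib power_divide)
  also have "\<dots> \<le> 2 * (eta * beta)\<^sup>2 * (lmax\<^sup>2 * (norm a)\<^sup>2) + 2 * (1/beta)\<^sup>2 * (eta\<^sup>2 * Lf\<^sup>2 * (norm g)\<^sup>2)"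
    using spectral(2) DD by (intro add_mono mult_left_mono) auto
  finally have "((alpha - beta) / (2 * beta)) * (norm w)\<^sup>2
      \<le> ((alpha - beta) / (2 * beta)) * (2 * (eta * beta)\<^sup>2 * (lmax\<^sup>2 * (norm a)\<^sup>2) + 2 * (1/beta)\<^sup>2 * (eta\<^sup>2 * Lf\<^sup>2 * (norm g)\<^sup>2))"
    using pos by (intro mult_left_mono) auto
  then have S3: "((alpha - beta) / (2 * beta)) * (norm w)\<^sup>2
      \<le> eta\<^sup>2 * (alpha - beta) * beta * lmax\<^sup>2 * (norm a)\<^sup>2 + eta\<^sup>2 * (alpha - beta) * Lf\<^sup>2 / beta ^ 3 * (norm g)\<^sup>2"
    using pos by (simp add: power_mult_distrib power_divide field_simps power3_eq_cube power2_eq_square)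
  have "eta\<^sup>2 * beta\<^sup>2 * lmax * (norm a)\<^sup>2 + eta\<^sup>2 * Lf\<^sup>2 / (beta\<^sup>2 * lmin) * (norm g)\<^sup>2
      + (eta\<^sup>2 * (alpha - beta) * beta * lmax\<^sup>2 * (norm a)\<^sup>2 + eta\<^sup>2 * (alpha - beta) * Lf\<^sup>2 / beta ^ 3 * (norm g)\<^sup>2)
      = eta\<^sup>2 * (beta\<^sup>2 * lmax + (alpha - beta) * beta * lmax\<^sup>2) * (norm a)\<^sup>2
      + eta\<^sup>2 * Lf\<^sup>2 / beta\<^sup>2 * (1 / lmin + (alpha - beta) / beta) * (norm g)\<^sup>2"
    using pos by (simp add: field_simps power2_eq_square power3_eq_cube)
  then show ?thesis
    using S2 S3 by linarith
qed

text \<open>Collecting the bounds on the individual terms of the Lyapunov increment; the slack is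
  \<open>\<eta>\<^sup>2 \<rho>\<^sup>2 (\<alpha>\<^sup>2 + 7\<alpha>\<beta> + \<beta>\<^sup>2)/3\<close> on \<open>A\<close>, \<open>\<eta>\<^sup>2/2\<close> on \<open>B\<close> and
  \<open>\<eta>(1/4 - \<eta> Lf/2) + \<eta>\<^sup>2 Lf\<^sup>2/2\<close> on \<open>G\<close>.\<close>

lemma lyapunov_coefficients_le:
  fixes eta alpha beta lmin lmax Lf A B G G0 :: real
  defines "e1 \<equiv> (alpha - beta) * lmin - (1 / 2) * (2 + 3 * Lf\<^sup>2)"
    and "e2 \<equiv> beta\<^sup>2 * lmax + (2 * alpha\<^sup>2 + beta\<^sup>2) * lmax\<^sup>2 + (5 / 2) * Lf\<^sup>2"
    and "e3 \<equiv> beta - 1 / 2 - alpha / (2 * beta\<^sup>2) - 1 / (2 * beta * lmin)"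
    and "e4 \<equiv> 2 * beta\<^sup>2 + 1 / 2"
    and "e5 \<equiv> 1 / 4 - (1 / (2 * beta)) * (1 / beta + 1 / lmin + alpha / beta) * Lf\<^sup>2"
    and "e6 \<equiv> (1 / beta\<^sup>2) * (1 + 1 / lmin + alpha / beta) * Lf\<^sup>2 + Lf * (1 + Lf) / 2"
  assumes pos: "0 < eta" "0 < beta" "0 \<le> alpha" "0 < lmin" "eta * Lf \<le> 1/2"
    and nonneg: "0 \<le> A" "0 \<le> B" "0 \<le> G"
  shows "(eta * (1/2 + Lf\<^sup>2 - (alpha - beta) * lmin) * A + eta / 2 * B) - eta * beta * B
      + (eta / 2 * A + eta * (1 / (2 * beta * lmin) + alpha / (2 * beta\<^sup>2)) * B
        + eta * Lf\<^sup>2 / (2 * beta) * (1 / beta + 1 / lmin + alpha / beta) * G)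
      + (eta\<^sup>2 * (5/3 * (alpha - beta)\<^sup>2 * lmax\<^sup>2 + 5/2 * Lf\<^sup>2) * A
        + 2 * eta\<^sup>2 * beta\<^sup>2 * B + 2 * eta\<^sup>2 * Lf\<^sup>2 / beta\<^sup>2 * G)
      + (eta\<^sup>2 * (beta\<^sup>2 * lmax + (alpha - beta) * beta * lmax\<^sup>2) * A
        + eta\<^sup>2 * Lf\<^sup>2 / beta\<^sup>2 * (1 / lmin + (alpha - beta) / beta) * G)
      + (eta / 2 * Lf\<^sup>2 * A - eta / 2 * G - eta / 2 * G0 + eta\<^sup>2 * Lf * G)
    \<le> - eta * (e1 - eta * e2) * A - eta * (e3 - eta * e4) * B - eta * (e5 - eta * e6) * G - eta / 2 * G0"
proof -
  have "0 \<le> eta\<^sup>2 * lmax\<^sup>2 * (alpha\<^sup>2 / 3 + 7 / 3 * alpha * beta + beta\<^sup>2 / 3) * A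
      + eta\<^sup>2 / 2 * B + (eta * (1/4 - eta * Lf / 2) + eta\<^sup>2 * Lf\<^sup>2 / 2) * G"
    using pos nonneg by (intro add_nonneg_nonneg mult_nonneg_nonneg) (auto simp: algebra_simps)
  moreover have "- eta * (e1 - eta * e2) * A - eta * (e3 - eta * e4) * B - eta * (e5 - eta * e6) * G
      - eta / 2 * G0
    = (eta * (1/2 + Lf\<^sup>2 - (alpha - beta) * lmin) * A + eta / 2 * B) - eta * beta * B
      + (eta / 2 * A + eta * (1 / (2 * beta * lmin) + alpha / (2 * beta\<^sup>2)) * B
        + eta * Lf\<^sup>2 / (2 * beta) * (1 / beta + 1 / lmin + alpha / beta) * G)
      + (eta\<^sup>2 * (5/3 * (alpha - beta)\<^sup>2 * lmax\<^sup>2 + 5/2 * Lf\<^sup>2) * A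
        + 2 * eta\<^sup>2 * beta\<^sup>2 * B + 2 * eta\<^sup>2 * Lf\<^sup>2 / beta\<^sup>2 * G)
      + (eta\<^sup>2 * (beta\<^sup>2 * lmax + (alpha - beta) * beta * lmax\<^sup>2) * A
        + eta\<^sup>2 * Lf\<^sup>2 / beta\<^sup>2 * (1 / lmin + (alpha - beta) / beta) * G)
      + (eta / 2 * Lf\<^sup>2 * A - eta / 2 * G - eta / 2 * G0 + eta\<^sup>2 * Lf * G)
      + (eta\<^sup>2 * lmax\<^sup>2 * (alpha\<^sup>2 / 3 + 7 / 3 * alpha * beta + beta\<^sup>2 / 3) * A
        + eta\<^sup>2 / 2 * B + (eta * (1/4 - eta * Lf / 2) + eta\<^sup>2 * Lf\<^sup>2 / 2) * G)"
    unfolding e1_def e2_def e3_def e4_def e5_def e6_def using pos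
    by (simp add: field_simps power2_eq_square power3_eq_cube)
  ultimately show ?thesis
    by linarith
qed

lemma lyapunov_step_le:
  fixes a b l d D g g0 :: "'v::real_inner" and Q :: "'v \<Rightarrow> 'v"
  assumes pos: "0 < eta" "0 < beta" "beta \<le> alpha" "0 < lmin" "eta * Lf \<le> 1/2"
    and Q: "psd_operator Q" "Q l = a" "inner b (Q b) \<le> (norm b)\<^sup>2 / lmin"
      "inner D (Q D) \<le> (norm D)\<^sup>2 / lmin"
    and spectral: "lmin * (norm a)\<^sup>2 \<le> inner a l" "inner a l \<le> lmax * (norm a)\<^sup>2"
      "(norm l)\<^sup>2 \<le> lmax\<^sup>2 * (norm a)\<^sup>2"
    and grad: "norm d \<le> Lf * norm a" "norm D \<le> eta * Lf * norm g" "norm (g - g0) \<le> Lf * norm a"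
    and obj: "F' - F \<le> - eta * inner g0 g + eta\<^sup>2 * Lf * (norm g)\<^sup>2"
  defines "e1 \<equiv> (alpha - beta) * lmin - (1 / 2) * (2 + 3 * Lf\<^sup>2)"
    and "e2 \<equiv> beta\<^sup>2 * lmax + (2 * alpha\<^sup>2 + beta\<^sup>2) * lmax\<^sup>2 + (5 / 2) * Lf\<^sup>2"
    and "e3 \<equiv> beta - 1 / 2 - alpha / (2 * beta\<^sup>2) - 1 / (2 * beta * lmin)"
    and "e4 \<equiv> 2 * beta\<^sup>2 + 1 / 2"
    and "e5 \<equiv> 1 / 4 - (1 / (2 * beta)) * (1 / beta + 1 / lmin + alpha / beta) * Lf\<^sup>2"
    and "e6 \<equiv> (1 / beta\<^sup>2) * (1 + 1 / lmin + alpha / beta) * Lf\<^sup>2 + Lf * (1 + Lf) / 2"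
  shows "lyapunov Q alpha beta (a - eta *\<^sub>R (alpha *\<^sub>R l + beta *\<^sub>R b + d))
        (b + ((eta * beta) *\<^sub>R l + (1/beta) *\<^sub>R D)) F'
      - lyapunov Q alpha beta a b F
    \<le> - eta * (e1 - eta * e2) * (norm a)\<^sup>2 - eta * (e3 - eta * e4) * (norm b)\<^sup>2
      - eta * (e5 - eta * e6) * (norm g)\<^sup>2 - eta / 2 * (norm g0)\<^sup>2"
proof -
  define u where "u = alpha *\<^sub>R l + beta *\<^sub>R b + d"
  define w where "w = (eta * beta) *\<^sub>R l + (1/beta) *\<^sub>R D"
  have "inner (Q b) l = inner a b"
    using psd_operator_commute[OF Q(1), of b l] Q(2) by (simp add: inner_commute)
  then have first_order: "- eta * inner a u - eta * inner u b + inner (Q b) w + (alpha / beta) * inner b w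
      + inner a w
    = (- eta * (alpha - beta) * inner a l - eta * inner a d - eta * inner d b) - eta * beta * (norm b)\<^sup>2
      + ((1/beta) * inner (Q b) D + (alpha / beta\<^sup>2) * inner b D + (1/beta) * inner a D)"
    using pos(2) unfolding u_def w_def power2_norm_eq_inner
    by (simp add: inner_add_left inner_add_right inner_commute[of l b] inner_commute[of b a]
        power2_eq_square field_simps)
  have "lyapunov Q alpha beta (a - eta *\<^sub>R u) (b + w) F' - lyapunov Q alpha beta a b F
    \<le> (eta * (1/2 + Lf\<^sup>2 - (alpha - beta) * lmin) * (norm a)\<^sup>2 + eta / 2 * (norm b)\<^sup>2)
      - eta * beta * (norm b)\<^sup>2
      + (eta / 2 * (norm a)\<^sup>2 + eta * (1 / (2 * beta * lmin) + alpha / (2 * beta\<^sup>2)) * (norm b)\<^sup>2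
        + eta * Lf\<^sup>2 / (2 * beta) * (1 / beta + 1 / lmin + alpha / beta) * (norm g)\<^sup>2)
      + (eta\<^sup>2 * (5/3 * (alpha - beta)\<^sup>2 * lmax\<^sup>2 + 5/2 * Lf\<^sup>2) * (norm a)\<^sup>2
        + 2 * eta\<^sup>2 * beta\<^sup>2 * (norm b)\<^sup>2 + 2 * eta\<^sup>2 * Lf\<^sup>2 / beta\<^sup>2 * (norm g)\<^sup>2)
      + (eta\<^sup>2 * (beta\<^sup>2 * lmax + (alpha - beta) * beta * lmax\<^sup>2) * (norm a)\<^sup>2
        + eta\<^sup>2 * Lf\<^sup>2 / beta\<^sup>2 * (1 / lmin + (alpha - beta) / beta) * (norm g)\<^sup>2)
      + (eta / 2 * Lf\<^sup>2 * (norm a)\<^sup>2 - eta / 2 * (norm g)\<^sup>2 - eta / 2 * (norm g0)\<^sup>2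
        + eta\<^sup>2 * Lf * (norm g)\<^sup>2)"
    using lyapunov_increment_eq[OF Q(1), of beta alpha a eta u b w F' F] first_order
      consensus_terms_le[OF pos(1,3) spectral(1) grad(1), of b]
      gradient_drift_terms_le[OF Q(1,3,4) grad(2) pos(1,2,4), of alpha a]
      primal_step_sq_le[OF spectral(3) grad(1,2) pos(2), of alpha b, folded u_def w_def]
      dual_step_sq_le[OF Q(1,2,4) spectral(2,3) grad(2) pos(2,3,4), folded w_def]
      objective_terms_le[OF obj grad(3) pos(1)] pos
    by linarith
  also have "\<dots> \<le> - eta * (e1 - eta * e2) * (norm a)\<^sup>2 - eta * (e3 - eta * e4) * (norm b)\<^sup>2
      - eta * (e5 - eta * e6) * (norm g)\<^sup>2 - eta / 2 * (norm g0)\<^sup>2"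
    unfolding e1_def e2_def e3_def e4_def e5_def e6_def using pos
    by (intro lyapunov_coefficients_le) simp_all
  finally show ?thesis
    unfolding u_def w_def .
qed

section \<open>Analysis of Algorithm 1\<close>

definition avg_objective :: "('n::finite \<Rightarrow> 'a \<Rightarrow> real) \<Rightarrow> 'a \<Rightarrow> real" where
  "avg_objective f y = (1 / real CARD('n)) * (\<Sum>i\<in>UNIV. f i y)"

lemma avg_objective_has_derivative:
  assumes "\<And>i y. (f i has_derivative (\<lambda>h. gf i y \<bullet> h)) (at y)"
  shows "(avg_objective f has_derivative (\<lambda>h. avg (\<lambda>i. gf i y) \<bullet> h)) (at y)"
proof -
  have "((\<lambda>y. (1 / real CARD('n)) * (\<Sum>i\<in>UNIV. f i y))
      has_derivative (\<lambda>h. (1 / real CARD('n)) * (\<Sum>i\<in>UNIV. gf i y \<bullet> h))) (at y)"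
    by (intro has_derivative_mult_right has_derivative_sum assms)
  then show ?thesis
    unfolding avg_objective_def[abs_def] avg_def
    by (rule has_derivative_eq_rhs) (simp add: fun_eq_iff inner_sum_left)
qed

lemma avg_lipschitz:
  fixes gf :: "'n::finite \<Rightarrow> 'a::real_normed_vector \<Rightarrow> 'b::real_normed_vector"
  assumes "\<And>i y z. norm (gf i y - gf i z) \<le> Lf * norm (y - z)"
  shows "norm (avg (\<lambda>i. gf i y) - avg (\<lambda>i. gf i z)) \<le> Lf * norm (y - z)"
proof -
  have "norm (avg (\<lambda>i. gf i y) - avg (\<lambda>i. gf i z))
      = (1 / real CARD('n)) * norm (\<Sum>i\<in>UNIV. gf i y - gf i z)"
    by (simp add: avg_def sum_subtractf flip: scaleR_diff_right)
  also have "\<dots> \<le> (1 / real CARD('n)) * (\<Sum>i\<in>(UNIV::'n set). Lf * norm (y - z))"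
    by (intro mult_left_mono order_trans[OF norm_sum] sum_mono assms) simp_all
  finally show ?thesis
    by simp
qed

text \<open>The pseudo-inverse \<open>Q\<close> is not part of the algorithm; it only enters the Lyapunov function.\<close>

locale algorithm1 =
  fixes A :: "real^'n^'n" and f :: "'n \<Rightarrow> real^'p \<Rightarrow> real" and gf :: "'n \<Rightarrow> real^'p \<Rightarrow> real^'p"
    and Lf alpha beta eta :: real and x v :: "nat \<Rightarrow> 'n \<Rightarrow> real^'p"
    and Q :: "(real^'p)^'n \<Rightarrow> (real^'p)^'n"
  assumes adj: "sym_nonneg_adj A" and connected: "graph_connected A" and card: "2 \<le> CARD('n)"
    and minimum: "\<exists>xs. \<forall>y. avg_objective f xs \<le> avg_objective f y"
    and gradient: "\<And>i y. (f i has_derivative (\<lambda>h. gf i y \<bullet> h)) (at y)"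
    and lipschitz: "\<And>i y z. norm (gf i y - gf i z) \<le> Lf * norm (y - z)"
    and parameters: "0 \<le> Lf" "0 < eta" "0 < beta" "beta \<le> alpha"
    and v0: "(\<Sum>j\<in>UNIV. v 0 j) = 0"
    and x_step: "\<And>k i. x (Suc k) i = x k i - eta *\<^sub>R
      (alpha *\<^sub>R (\<Sum>j\<in>UNIV. laplacian A $ i $ j *\<^sub>R x k j) + beta *\<^sub>R v k i + gf i (x k i))"
    and v_step: "\<And>k i. v (Suc k) i = v k i + (eta * beta) *\<^sub>R (\<Sum>j\<in>UNIV. laplacian A $ i $ j *\<^sub>R x k j)"
    and pseudo_inverse: "psd_operator Q" "\<And>z. Q (kron_mult (laplacian A) z) = Kproj z"
      "\<And>z. inner z (Q z) \<le> (norm (Kproj z))\<^sup>2 / rho2 (laplacian A)"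
begin

definition xbar :: "nat \<Rightarrow> real^'p" where
  "xbar k = avg (x k)"

definition xstack :: "nat \<Rightarrow> (real^'p)^'n" where
  "xstack k = vec_lambda (x k)"

definition vstack :: "nat \<Rightarrow> (real^'p)^'n" where
  "vstack k = vec_lambda (v k)"

definition gstack :: "nat \<Rightarrow> (real^'p)^'n" where
  "gstack k = (\<chi> i. gf i (x k i))"

definition gstack0 :: "nat \<Rightarrow> (real^'p)^'n" where
  "gstack0 k = (\<chi> i. gf i (xbar k))"

definition disagreement :: "nat \<Rightarrow> (real^'p)^'n" where
  "disagreement k = Kproj (xstack k)"

definition dual_disagreement :: "nat \<Rightarrow> (real^'p)^'n" where
  "dual_disagreement k = Kproj (vstack k + (1 / beta) *\<^sub>R gstack0 k)"

definition gap :: "nat \<Rightarrow> real" where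
  "gap k = real CARD('n) * (avg_objective f (xbar k) - (INF y. avg_objective f y))"

definition lyap :: "nat \<Rightarrow> real" where
  "lyap k = lyapunov Q alpha beta (disagreement k) (dual_disagreement k) (gap k)"

lemma xstack_step:
  "xstack (Suc k) = xstack k - eta *\<^sub>R (alpha *\<^sub>R kron_mult (laplacian A) (xstack k)
    + beta *\<^sub>R vstack k + gstack k)"
  by (simp add: vec_eq_iff xstack_def vstack_def gstack_def x_step)

lemma vstack_step: "vstack (Suc k) = vstack k + (eta * beta) *\<^sub>R kron_mult (laplacian A) (xstack k)"
  by (simp add: vec_eq_iff xstack_def vstack_def v_step)

lemma Hproj_vstack: "Hproj (vstack k) = 0"
proof (induction k)
  case 0
  then show ?case
    using v0 by (simp add: vec_eq_iff vstack_def avg_def vec_lambda_inverse)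
next
  case (Suc k)
  then show ?case
    by (simp add: vstack_step linear_add[OF linear_Hproj] linear_scale[OF linear_Hproj]
        Hproj_kron_laplacian[OF adj])
qed

lemma xbar_step: "xbar (Suc k) = xbar k - eta *\<^sub>R avg (\<lambda>i. gf i (x k i))"
proof -
  have "Hproj (xstack (Suc k)) = Hproj (xstack k) - eta *\<^sub>R Hproj (gstack k)"
    by (simp add: xstack_step linear_add[OF linear_Hproj] linear_diff[OF linear_Hproj]
        linear_scale[OF linear_Hproj] Hproj_kron_laplacian[OF adj] Hproj_vstack)
  then have "Hproj (xstack (Suc k)) $ i = Hproj (xstack k) $ i - eta *\<^sub>R Hproj (gstack k) $ i" for i
    by simp
  then show ?thesis
    by (simp add: xbar_def xstack_def gstack_def vec_lambda_inverse)
qed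

lemma disagreement_step:
  "disagreement (Suc k) = disagreement k - eta *\<^sub>R (alpha *\<^sub>R kron_mult (laplacian A) (disagreement k)
    + beta *\<^sub>R dual_disagreement k + Kproj (gstack k - gstack0 k))"
proof -
  have "dual_disagreement k = vstack k + (1 / beta) *\<^sub>R Kproj (gstack0 k)"
    by (simp add: dual_disagreement_def linear_add[OF linear_Kproj] linear_scale[OF linear_Kproj]
        Kproj_eq_self[OF Hproj_vstack])
  then show ?thesis
    using parameters(3)
    by (simp add: disagreement_def xstack_step linear_add[OF linear_Kproj] linear_diff[OF linear_Kproj]
        linear_scale[OF linear_Kproj] Kproj_kron_laplacian[OF adj] kron_laplacian_Kproj
        Kproj_eq_self[OF Hproj_vstack] algebra_simps)
qed

lemma dual_disagreement_step:
  "dual_disagreement (Suc k) = dual_disagreement k + ((eta * beta) *\<^sub>R kron_mult (laplacian A) (disagreement k)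
    + (1 / beta) *\<^sub>R Kproj (gstack0 (Suc k) - gstack0 k))"
  by (simp add: dual_disagreement_def disagreement_def vstack_step linear_add[OF linear_Kproj]
      linear_diff[OF linear_Kproj] linear_scale[OF linear_Kproj] Kproj_kron_laplacian[OF adj]
      kron_laplacian_Kproj algebra_simps)

lemma norm_gstack_diff_le: "norm (gstack k - gstack0 k) \<le> Lf * norm (disagreement k)"
  by (rule norm_vec_le_componentwise)
    (use lipschitz parameters(1) in \<open>simp_all add: gstack_def gstack0_def disagreement_def
      xstack_def xbar_def Kproj_nth vec_lambda_inverse\<close>)

lemma norm_gstack0_step_le: "norm (gstack0 (Suc k) - gstack0 k) \<le> eta * Lf * norm (Hproj (gstack k))"
proof -
  have "norm (gstack0 (Suc k) - gstack0 k) \<le> Lf * norm (eta *\<^sub>R Hproj (gstack k))"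
  proof (rule norm_vec_le_componentwise)
    show "norm ((gstack0 (Suc k) - gstack0 k) $ i) \<le> Lf * norm ((eta *\<^sub>R Hproj (gstack k)) $ i)" for i
      using lipschitz[of i "xbar (Suc k)" "xbar k"]
      by (simp add: gstack0_def gstack_def xbar_step vec_lambda_inverse)
  qed (rule parameters(1))
  then show ?thesis
    using parameters(2) by (simp add: mult.commute mult.left_commute)
qed

lemma gap_nonneg: "0 \<le> gap k"
proof -
  obtain xs where "\<And>y. avg_objective f xs \<le> avg_objective f y"
    using minimum by blast
  then have "bdd_below (range (avg_objective f))"
    by (intro bdd_belowI2) auto
  then show ?thesis
    by (simp add: gap_def cINF_lower)
qed

lemma gap_step:
  "gap (Suc k) - gap k \<le> - eta * inner (Hproj (gstack0 k)) (Hproj (gstack k))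
    + eta\<^sup>2 * Lf * (norm (Hproj (gstack k)))\<^sup>2"
proof -
  let ?n = "real CARD('n)"
  define g where "g = avg (\<lambda>i. gf i (x k i))"
  have "avg_objective f (xbar (Suc k)) \<le> avg_objective f (xbar k)
      + avg (\<lambda>i. gf i (xbar k)) \<bullet> (- eta *\<^sub>R g) + Lf * (norm (- eta *\<^sub>R g))\<^sup>2"
    using descent_lemma[OF avg_objective_has_derivative[OF gradient] avg_lipschitz[OF lipschitz]
        parameters(1), where y = "xbar (Suc k)" and x = "xbar k"]
    by (simp add: xbar_step g_def)
  then have descent: "avg_objective f (xbar (Suc k)) - avg_objective f (xbar k)
      \<le> - eta * (avg (\<lambda>i. gf i (xbar k)) \<bullet> g) + eta\<^sup>2 * Lf * (norm g)\<^sup>2"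
    by (simp add: power_mult_distrib algebra_simps)
  have "gap (Suc k) - gap k = ?n * (avg_objective f (xbar (Suc k)) - avg_objective f (xbar k))"
    by (simp add: gap_def algebra_simps)
  also have "\<dots> \<le> ?n * (- eta * (avg (\<lambda>i. gf i (xbar k)) \<bullet> g) + eta\<^sup>2 * Lf * (norm g)\<^sup>2)"
    using descent by (rule mult_left_mono) simp
  also have "\<dots> = - eta * inner (Hproj (gstack0 k)) (Hproj (gstack k))
      + eta\<^sup>2 * Lf * (norm (Hproj (gstack k)))\<^sup>2"
    by (simp add: inner_vec_def power2_norm_Hproj gstack0_def gstack_def g_def vec_lambda_inverse
        algebra_simps)
  finally show ?thesis .
qed

definition residual :: "nat \<Rightarrow> real" where
  "residual k = (norm (disagreement k))\<^sup>2 + (norm (dual_disagreement k))\<^sup>2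
    + (norm (Hproj (gstack k)))\<^sup>2 + (norm (Hproj (gstack0 k)))\<^sup>2"

lemma lyap_Suc_le:
  defines "e1 \<equiv> (alpha - beta) * rho2 (laplacian A) - (1 / 2) * (2 + 3 * Lf\<^sup>2)"
    and "e2 \<equiv> beta\<^sup>2 * rho (laplacian A) + (2 * alpha\<^sup>2 + beta\<^sup>2) * (rho (laplacian A))\<^sup>2 + (5 / 2) * Lf\<^sup>2"
    and "e3 \<equiv> beta - 1 / 2 - alpha / (2 * beta\<^sup>2) - 1 / (2 * beta * rho2 (laplacian A))"
    and "e4 \<equiv> 2 * beta\<^sup>2 + 1 / 2"
    and "e5 \<equiv> 1 / 4 - (1 / (2 * beta)) * (1 / beta + 1 / rho2 (laplacian A) + alpha / beta) * Lf\<^sup>2"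
    and "e6 \<equiv> (1 / beta\<^sup>2) * (1 + 1 / rho2 (laplacian A) + alpha / beta) * Lf\<^sup>2 + Lf * (1 + Lf) / 2"
  assumes step_size: "eta * Lf \<le> 1/2"
    and c: "c \<le> eta * (e1 - eta * e2)" "c \<le> eta * (e3 - eta * e4)" "c \<le> eta * (e5 - eta * e6)"
      "c \<le> eta / 2"
  shows "lyap (Suc k) \<le> lyap k - c * residual k"
proof -
  let ?a = "disagreement k" and ?b = "dual_disagreement k"
  let ?D = "Kproj (gstack0 (Suc k) - gstack0 k)"
  have lmin: "0 < rho2 (laplacian A)"
    by (rule rho2_laplacian_pos[OF adj connected card])
  have Ka: "Kproj ?a = ?a" and Kb: "Kproj ?b = ?b"
    by (simp_all add: disagreement_def dual_disagreement_def)
  have "norm (Hproj (gstack k) - Hproj (gstack0 k)) \<le> Lf * norm ?a"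
    using order_trans[OF norm_Hproj_le norm_gstack_diff_le] by (simp add: linear_diff[OF linear_Hproj])
  moreover have "norm (Kproj (gstack k - gstack0 k)) \<le> Lf * norm ?a"
    by (rule order_trans[OF norm_Kproj_le norm_gstack_diff_le])
  moreover have "norm ?D \<le> eta * Lf * norm (Hproj (gstack k))"
    by (rule order_trans[OF norm_Kproj_le norm_gstack0_step_le])
  ultimately have "lyap (Suc k) - lyap k
      \<le> - eta * (e1 - eta * e2) * (norm ?a)\<^sup>2 - eta * (e3 - eta * e4) * (norm ?b)\<^sup>2
        - eta * (e5 - eta * e6) * (norm (Hproj (gstack k)))\<^sup>2 - eta / 2 * (norm (Hproj (gstack0 k)))\<^sup>2"
    unfolding lyap_def disagreement_step dual_disagreement_step e1_def e2_def e3_def e4_def e5_def e6_def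
    using pseudo_inverse(2)[of ?a] pseudo_inverse(3)[of ?b] pseudo_inverse(3)[of ?D]
      kron_laplacian_quadratic_ge_rho2[OF adj connected card, of ?a]
      kron_laplacian_quadratic_le_rho[OF adj, of ?a] norm_kron_laplacian_le[OF adj, of ?a]
    by (intro lyapunov_step_le[OF parameters(2,3,4) lmin step_size pseudo_inverse(1)] gap_step)
      (simp_all add: Ka Kb)
  moreover have "- eta * (e1 - eta * e2) * (norm ?a)\<^sup>2 - eta * (e3 - eta * e4) * (norm ?b)\<^sup>2
        - eta * (e5 - eta * e6) * (norm (Hproj (gstack k)))\<^sup>2 - eta / 2 * (norm (Hproj (gstack0 k)))\<^sup>2
      \<le> - c * residual k"
    unfolding residual_def
    using mult_right_mono[OF c(1), of "(norm ?a)\<^sup>2"] mult_right_mono[OF c(2), of "(norm ?b)\<^sup>2"]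
      mult_right_mono[OF c(3), of "(norm (Hproj (gstack k)))\<^sup>2"]
      mult_right_mono[OF c(4), of "(norm (Hproj (gstack0 k)))\<^sup>2"]
    by (simp add: algebra_simps)
  ultimately show ?thesis
    by linarith
qed

lemma gap_le_lyap: "gap k \<le> lyap k"
proof -
  have "- inner (disagreement k) (dual_disagreement k)
      \<le> 1/2 * (norm (disagreement k))\<^sup>2 + 1/2 * (norm (dual_disagreement k))\<^sup>2"
    using young_inner_le[of 1 "disagreement k" "- dual_disagreement k"] by simp
  moreover have "1/2 * (norm (dual_disagreement k))\<^sup>2 \<le> alpha / (2 * beta) * (norm (dual_disagreement k))\<^sup>2"
    using parameters(3,4) by (intro mult_right_mono) (auto simp: field_simps)
  ultimately show ?thesis
    using psd_operator_nonneg[OF pseudo_inverse(1), of "dual_disagreement k"]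
    unfolding lyapunov_def lyap_def by linarith
qed

lemma lyap_le:
  "lyap k \<le> ((alpha + beta) / (2 * beta) + 1 / (2 * rho2 (laplacian A)))
    * ((norm (disagreement k))\<^sup>2 + (norm (dual_disagreement k))\<^sup>2 + gap k)"
proof -
  let ?a = "disagreement k" and ?b = "dual_disagreement k"
  let ?c = "(alpha + beta) / (2 * beta) + 1 / (2 * rho2 (laplacian A))"
  have lmin: "0 < rho2 (laplacian A)"
    by (rule rho2_laplacian_pos[OF adj connected card])
  have "1 \<le> (alpha + beta) / (2 * beta)"
    using parameters(3,4) by (simp add: field_simps)
  moreover have "0 \<le> 1 / (2 * rho2 (laplacian A))"
    using lmin by simp
  ultimately have "1 \<le> ?c"
    by linarith
  have "inner ?a ?b \<le> 1/2 * (norm ?a)\<^sup>2 + 1/2 * (norm ?b)\<^sup>2"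
    using young_inner_le[of 1 ?a ?b] by simp
  moreover have "inner ?b (Q ?b) \<le> (norm ?b)\<^sup>2 / rho2 (laplacian A)"
    using pseudo_inverse(3)[of ?b] by (simp add: dual_disagreement_def)
  moreover have "?c * (norm ?b)\<^sup>2 = alpha / (2 * beta) * (norm ?b)\<^sup>2 + 1/2 * (norm ?b)\<^sup>2
      + 1/2 * ((norm ?b)\<^sup>2 / rho2 (laplacian A))"
    using parameters(3) lmin by (simp add: field_simps)
  moreover have "(norm ?a)\<^sup>2 \<le> ?c * (norm ?a)\<^sup>2" "gap k \<le> ?c * gap k"
    using \<open>1 \<le> ?c\<close> gap_nonneg[of k] by (simp_all add: mult_right_mono[of 1 ?c, simplified])
  ultimately show ?thesis
    unfolding lyap_def lyapunov_def by (simp add: algebra_simps)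
qed

lemma convergence:
  assumes step: "\<And>k. lyap (Suc k) \<le> lyap k - c * residual k" and "0 < c"
  defines "B \<equiv> ((alpha + beta) / (2 * beta) + 1 / (2 * rho2 (laplacian A)))
    * ((norm (disagreement 0))\<^sup>2 + (norm (dual_disagreement 0))\<^sup>2 + gap 0)"
  shows "(1 / real (T + 1)) * (\<Sum>k\<in>{0..T}. residual k) \<le> B / (c * real (T + 1))"
    and "gap (Suc T) \<le> B"
proof -
  have "c * (\<Sum>k\<in>{0..T}. residual k) \<le> (\<Sum>k<Suc T. lyap k - lyap (Suc k))"
    unfolding sum_distrib_left atLeast0AtMost lessThan_Suc_atMost[symmetric]
    using step by (intro sum_mono) (simp add: algebra_simps)
  then have "c * (\<Sum>k\<in>{0..T}. residual k) \<le> lyap 0 - lyap (Suc T)"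
    by (simp only: sum_lessThan_telescope')
  moreover have "0 \<le> c * (\<Sum>k\<in>{0..T}. residual k)"
    using \<open>0 < c\<close> by (intro mult_nonneg_nonneg sum_nonneg) (simp_all add: residual_def)
  moreover have "0 \<le> lyap (Suc T)"
    using gap_le_lyap gap_nonneg order_trans by blast
  ultimately have "c * (\<Sum>k\<in>{0..T}. residual k) \<le> B" and "gap (Suc T) \<le> B"
    using lyap_le[of 0] gap_le_lyap[of "Suc T"] unfolding B_def by linarith+
  then show "gap (Suc T) \<le> B"
    and "(1 / real (T + 1)) * (\<Sum>k\<in>{0..T}. residual k) \<le> B / (c * real (T + 1))"
    using \<open>0 < c\<close> divide_right_mono[of "\<Sum>k\<in>{0..T}. residual k" "B / c" "real (T + 1)"]
    by (simp_all add: pos_le_divide_eq mult.commute divide_divide_eq_left)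
qed

lemma Knorm2_x: "Knorm2 (x k) = (norm (disagreement k))\<^sup>2"
  by (simp add: Knorm2_eq_norm_Kproj disagreement_def xstack_def)

lemma Knorm2_dual:
  "Knorm2 (\<lambda>i. v k i + (1 / beta) *\<^sub>R gf i (avg (x k))) = (norm (dual_disagreement k))\<^sup>2"
proof -
  have "vec_lambda (\<lambda>i. v k i + (1 / beta) *\<^sub>R gf i (avg (x k))) = vstack k + (1 / beta) *\<^sub>R gstack0 k"
    by (simp add: vec_eq_iff vstack_def gstack0_def xbar_def)
  then show ?thesis
    by (simp add: Knorm2_eq_norm_Kproj dual_disagreement_def)
qed

lemma power2_norm_Hproj_gstack:
  "(norm (Hproj (gstack k)))\<^sup>2 = real CARD('n) * (norm (avg (\<lambda>i. gf i (x k i))))\<^sup>2"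
  by (simp add: power2_norm_Hproj gstack_def vec_lambda_inverse)

lemma power2_norm_Hproj_gstack0:
  "(norm (Hproj (gstack0 k)))\<^sup>2 = real CARD('n) * (norm (avg (\<lambda>i. gf i (xbar k))))\<^sup>2"
  by (simp add: power2_norm_Hproj gstack0_def vec_lambda_inverse)

lemma residual_eq:
  "residual k = (\<Sum>i\<in>UNIV. (norm (x k i - avg (x k)))\<^sup>2)
    + Knorm2 (\<lambda>i. v k i + (1 / beta) *\<^sub>R gf i (avg (x k)))
    + real CARD('n) * (norm (avg (\<lambda>i. gf i (x k i))))\<^sup>2
    + real CARD('n) * (norm ((1 / real CARD('n)) *\<^sub>R (\<Sum>i\<in>UNIV. gf i (avg (x k)))))\<^sup>2"
proof -
  have "(1 / real CARD('n)) *\<^sub>R (\<Sum>i\<in>UNIV. gf i y) = avg (\<lambda>i. gf i y)" for y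
    by (simp add: avg_def)
  then show ?thesis
    by (simp add: residual_def Knorm2_def[symmetric] Knorm2_x Knorm2_dual power2_norm_Hproj_gstack
        power2_norm_Hproj_gstack0 xbar_def)
qed

lemma lyap_bound_eq:
  "(norm (disagreement k))\<^sup>2 + (norm (dual_disagreement k))\<^sup>2 + gap k
    = Knorm2 (x k) + Knorm2 (\<lambda>i. v k i + (1 / beta) *\<^sub>R gf i (avg (x k)))
      + real CARD('n) * (avg_objective f (avg (x k)) - (INF y. avg_objective f y))"
  by (simp add: Knorm2_x Knorm2_dual gap_def xbar_def)

end

lemma step_size_conditions:
  fixes lmin lmax Lf alpha beta eta :: real
  defines "e1 \<equiv> (alpha - beta) * lmin - (1 / 2) * (2 + 3 * Lf\<^sup>2)"
    and "e2 \<equiv> beta\<^sup>2 * lmax + (2 * alpha\<^sup>2 + beta\<^sup>2) * lmax\<^sup>2 + (5 / 2) * Lf\<^sup>2"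
    and "e3 \<equiv> beta - 1 / 2 - alpha / (2 * beta\<^sup>2) - 1 / (2 * beta * lmin)"
    and "e4 \<equiv> 2 * beta\<^sup>2 + 1 / 2"
    and "e5 \<equiv> 1 / 4 - (1 / (2 * beta)) * (1 / beta + 1 / lmin + alpha / beta) * Lf\<^sup>2"
    and "e6 \<equiv> (1 / beta\<^sup>2) * (1 + 1 / lmin + alpha / beta) * Lf\<^sup>2 + Lf * (1 + Lf) / 2"
  defines "c \<equiv> eta * Min {e1 - eta * e2, e3 - eta * e4, e5 - eta * e6, 1 / 4}"
  assumes pos: "0 < lmin" "0 \<le> lmax" "0 < Lf" "0 < beta" "0 \<le> alpha" "0 < eta"
    and eta: "eta < Min {e1 / e2, e3 / e4, e5 / e6}"
  shows "eta * Lf \<le> 1/2" "0 < c" "c \<le> eta * (e1 - eta * e2)" "c \<le> eta * (e3 - eta * e4)"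
    "c \<le> eta * (e5 - eta * e6)" "c \<le> eta / 2"
proof -
  have "0 < e2" "0 < e4"
    using pos unfolding e2_def e4_def by (simp_all add: add_nonneg_pos)
  moreover have e6: "Lf / 2 \<le> e6"
    using pos unfolding e6_def by (simp add: field_simps add_increasing2)
  ultimately have "0 < e1 - eta * e2" "0 < e3 - eta * e4" "0 < e5 - eta * e6"
    using eta pos by (simp_all add: less_divide_eq field_simps)
  moreover define m where "m = Min {e1 - eta * e2, e3 - eta * e4, e5 - eta * e6, 1 / 4}"
  ultimately have "0 < m"
    by simp
  have m: "m \<le> e1 - eta * e2" "m \<le> e3 - eta * e4" "m \<le> e5 - eta * e6" "m \<le> 1/4"
    unfolding m_def by (rule Min_le; simp)+
  show "0 < c"
    unfolding c_def m_def[symmetric] using \<open>0 < m\<close> pos by simp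
  show "c \<le> eta * (e1 - eta * e2)" "c \<le> eta * (e3 - eta * e4)" "c \<le> eta * (e5 - eta * e6)"
    unfolding c_def m_def[symmetric] using m pos by (simp_all add: mult_left_mono)
  show "c \<le> eta / 2"
    unfolding c_def m_def[symmetric] using mult_left_mono[OF m(4), of eta] pos by simp
  have "e5 \<le> 1/4"
    using pos unfolding e5_def by simp
  moreover have "eta * Lf / 2 \<le> eta * e6"
    using mult_left_mono[OF e6 less_imp_le[OF pos(6)]] by simp
  ultimately show "eta * Lf \<le> 1/2"
    using \<open>0 < e5 - eta * e6\<close> by linarith
qed

theorem theorem1:
  fixes A :: "real^'n^'n"
    and f :: "'n \<Rightarrow> real^'p \<Rightarrow> real"
    and gf :: "'n \<Rightarrow> real^'p \<Rightarrow> real^'p"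
    and Lf kappa2 alpha beta eta :: real
    and x v :: "nat \<Rightarrow> 'n \<Rightarrow> real^'p"
  assumes n2: "CARD('n) \<ge> 2"
    and adj: "sym_nonneg_adj A"
    and A1: "graph_connected A"
    and A2: "\<exists>xs. \<forall>y. (1 / real CARD('n)) * (\<Sum>i\<in>UNIV. f i xs) \<le> (1 / real CARD('n)) * (\<Sum>i\<in>UNIV. f i y)"
    and A3_grad: "\<And>i y. (f i has_derivative (\<lambda>h. gf i y \<bullet> h)) (at y)"
    and A3_lip: "\<And>i y z. norm (gf i y - gf i z) \<le> Lf * norm (y - z)"
    and Lf_pos: "Lf > 0"
  defines "Lap \<equiv> laplacian A"
    and "fbar \<equiv> (\<lambda>y. (1 / real CARD('n)) * (\<Sum>i\<in>UNIV. f i y))"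
  defines "fstar \<equiv> (INF y. fbar y)"
    and "kappa1 \<equiv> (2 + 3 * Lf\<^sup>2) / (2 * rho2 Lap)"
    and "kappa3 \<equiv> (1 / 4) * (1 + sqrt (1 + 8 * kappa2 + 8 / rho2 Lap))"
    and "kappa4 \<equiv> (kappa2 + 1 / rho2 Lap) * Lf\<^sup>2
                   + sqrt ((kappa2 + 1 / rho2 Lap)\<^sup>2 * Lf\<^sup>2 + 2) * Lf"
  assumes kappa2: "kappa2 > 1"
    and beta: "beta > Max {kappa1 / (kappa2 - 1), kappa3, kappa4}"
    and alpha: "beta + kappa1 < alpha" "alpha \<le> kappa2 * beta"
  defines "eps1 \<equiv> (alpha - beta) * rho2 Lap - (1 / 2) * (2 + 3 * Lf\<^sup>2)"
    and "eps2 \<equiv> beta\<^sup>2 * rho Lap + (2 * alpha\<^sup>2 + beta\<^sup>2) * (rho Lap)\<^sup>2 + (5 / 2) * Lf\<^sup>2"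
    and "eps3 \<equiv> beta - 1 / 2 - alpha / (2 * beta\<^sup>2) - 1 / (2 * beta * rho2 Lap)"
    and "eps4 \<equiv> 2 * beta\<^sup>2 + 1 / 2"
    and "eps5 \<equiv> 1 / 4 - (1 / (2 * beta)) * (1 / beta + 1 / rho2 Lap + alpha / beta) * Lf\<^sup>2"
    and "eps6 \<equiv> (1 / beta\<^sup>2) * (1 + 1 / rho2 Lap + alpha / beta) * Lf\<^sup>2 + Lf * (1 + Lf) / 2"
  assumes eta: "0 < eta" "eta < Min {eps1 / eps2, eps3 / eps4, eps5 / eps6}"
  defines "eps7 \<equiv> eta * Min {eps1 - eta * eps2, eps3 - eta * eps4, eps5 - eta * eps6, 1 / 4}"
    and "eps8 \<equiv> (alpha + beta) / (2 * beta) + 1 / (2 * rho2 Lap)"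
  assumes v0: "(\<Sum>j\<in>UNIV. v 0 j) = 0"
    and x_step: "\<And>k i. x (Suc k) i = x k i - eta *\<^sub>R
        (alpha *\<^sub>R (\<Sum>j\<in>UNIV. Lap$i$j *\<^sub>R x k j) + beta *\<^sub>R v k i + gf i (x k i))"
    and v_step: "\<And>k i. v (Suc k) i = v k i + (eta * beta) *\<^sub>R (\<Sum>j\<in>UNIV. Lap$i$j *\<^sub>R x k j)"
  defines "gradf \<equiv> (\<lambda>y. (1 / real CARD('n)) *\<^sub>R (\<Sum>i\<in>UNIV. gf i y))"
  defines "Vhat \<equiv> (\<lambda>k. Knorm2 (x k)
                      + Knorm2 (\<lambda>i. v k i + (1 / beta) *\<^sub>R gf i (avg (x k)))
                      + real CARD('n) * (fbar (avg (x k)) - fstar))"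
    and "W \<equiv> (\<lambda>k. (\<Sum>i\<in>UNIV. (norm (x k i - avg (x k)))\<^sup>2)
                      + Knorm2 (\<lambda>i. v k i + (1 / beta) *\<^sub>R gf i (avg (x k)))
                      + real CARD('n) * (norm (avg (\<lambda>i. gf i (x k i))))\<^sup>2
                      + real CARD('n) * (norm (gradf (avg (x k))))\<^sup>2)"
  shows "\<forall>T::nat.
           (1 / real (T + 1)) * (\<Sum>k\<in>{0..T}. W k) \<le> eps8 * Vhat 0 / (eps7 * real (T + 1))
         \<and> fbar (avg (x (Suc T))) - fstar \<le> eps8 * Vhat 0 / real CARD('n)"

proof -
  have lmin: "0 < rho2 Lap"
    unfolding Lap_def by (rule rho2_laplacian_pos[OF adj A1 n2])
  \<comment> \<open>Of the conditions on \<open>\<alpha>\<close> and \<open>\<beta>\<close> only \<open>\<beta> > \<kappa>\<^sub>3 > 0\<close> and \<open>\<alpha> > \<beta> + \<kappa>\<^sub>1 > \<beta>\<close>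
    are used: the bound on \<open>\<eta>\<close> already forces \<open>\<epsilon>\<^sub>1, \<epsilon>\<^sub>3, \<epsilon>\<^sub>5 > 0\<close>.\<close>
  have "0 \<le> 1 + 8 * kappa2 + 8 / rho2 Lap"
    using kappa2 lmin by simp
  then have "0 < kappa3"
    unfolding kappa3_def by (simp add: add_pos_nonneg)
  moreover have "0 < kappa1"
    using lmin unfolding kappa1_def by (simp add: add_pos_nonneg)
  ultimately have "0 < beta" and "beta < alpha"
    using beta alpha(1) by simp_all
  then have params: "eta * Lf \<le> 1/2" "0 < eps7" "eps7 \<le> eta * (eps1 - eta * eps2)"
    "eps7 \<le> eta * (eps3 - eta * eps4)" "eps7 \<le> eta * (eps5 - eta * eps6)" "eps7 \<le> eta / 2"
    using step_size_conditions[of "rho2 Lap" "rho Lap" Lf beta alpha eta, folded eps1_def eps2_def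
        eps3_def eps4_def eps5_def eps6_def, folded eps7_def]
      lmin rho_laplacian_nonneg[OF adj, folded Lap_def] Lf_pos eta
    by simp_all
  obtain Q :: "(real^'p)^'n \<Rightarrow> _" where Q: "psd_operator Q" "\<And>z. Q (kron_mult Lap z) = Kproj z"
    "\<And>z. kron_mult Lap (Q z) = Kproj z" "\<And>z. Kproj (Q z) = Q z"
    using kron_laplacian_pseudo_inverse[OF adj A1] unfolding Lap_def by blast
  interpret algorithm1 A f gf Lf alpha beta eta x v Q
    using adj A1 n2 A2 A3_grad A3_lip Lf_pos eta(1) \<open>0 < beta\<close> \<open>beta < alpha\<close> v0 x_step v_step Q
      pseudo_inverse_quadratic_le[OF adj A1 n2, of Q]
    by unfold_locales (simp_all add: avg_objective_def Lap_def)
  have step: "lyap (Suc k) \<le> lyap k - eps7 * residual k" for k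
    using params unfolding eps1_def eps2_def eps3_def eps4_def eps5_def eps6_def Lap_def
    by (intro lyap_Suc_le) simp_all
  have "W = residual"
    by (simp add: fun_eq_iff W_def gradf_def residual_eq)
  moreover have "((alpha + beta) / (2 * beta) + 1 / (2 * rho2 (laplacian A)))
      * ((norm (disagreement 0))\<^sup>2 + (norm (dual_disagreement 0))\<^sup>2 + gap 0) = eps8 * Vhat 0"
    unfolding eps8_def Lap_def Vhat_def lyap_bound_eq fbar_def fstar_def avg_objective_def ..
  moreover have "gap k = real CARD('n) * (fbar (avg (x k)) - fstar)" for k
    by (simp add: gap_def fbar_def fstar_def avg_objective_def xbar_def)
  ultimately show ?thesis
    using convergence[OF step params(2)] by (simp add: pos_le_divide_eq mult.commute)
qed

end
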